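(* Let $k$ be a field. A 1-complex over $k$ is minimal if and only if it is (the edge set of) one of the following graphs: (1) an even cycle; (2) the union of two odd cycles meeting in exactly one vertex; (3a) if $\operatorname{char}k=2$: the disjoint union of two odd cycles; (3b) if $\operatorname{char}k\ne2$: two vertex-disjoint odd cycles together with a path of one or more edges joining a vertex of the first cycle to a vertex of the second, the internal vertices of the path lying on neither cycle.
   Context: A 1-complex on a set $A$ is a finite set of distinct multisets of cardinality 2 from $A$, i.e. a graph with loops $\{a,a\}$ allowed but no multiple edges. A cycle of length 1 is a loop; cycles of length $m\ge3$ are the usual $m$-gons (a 2-cycle is impossible); a cycle is even or odd according to its number of edges. A weighting assigns a nonzero $w_e\in k$ to each edge; it is balanced if $\sum_ew_e=0$ and for each vertex $i$, $\sum_{e\ni i}\operatorname{mult}_i(e)w_e=0$ (a loop at $i$ contributes $2w_e$). A complex is balanceable if some weighting balances it, and minimal if it is balanceable but no nonempty proper subset of its edges is balanceable. *)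

theory Defs
  imports Main "HOL-Library.Multiset"
begin

definition one_complex :: "'a multiset set \<Rightarrow> bool" where
  "one_complex C \<longleftrightarrow> finite C \<and> (\<forall>e\<in>C. size e = 2)"

definition balanced_weighting :: "'a multiset set \<Rightarrow> ('a multiset \<Rightarrow> 'k::field) \<Rightarrow> bool" where
  "balanced_weighting C w \<longleftrightarrow>
     (\<forall>e\<in>C. w e \<noteq> 0) \<and>
     (\<Sum>e\<in>C. w e) = 0 \<and>
     (\<forall>i. (\<Sum>e\<in>C. of_nat (count e i) * w e) = 0)"

definition balanceable :: "'k::field itself \<Rightarrow> 'a multiset set \<Rightarrow> bool" where
  "balanceable _ C \<longleftrightarrow> (\<exists>w :: 'a multiset \<Rightarrow> 'k. balanced_weighting C w)"

definition minimal_complex :: "'k::field itself \<Rightarrow> 'a multiset set \<Rightarrow> bool" where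
  "minimal_complex K C \<longleftrightarrow> C \<noteq> {} \<and> balanceable K C \<and>
     (\<forall>D. D \<subseteq> C \<and> D \<noteq> {} \<and> D \<noteq> C \<longrightarrow> \<not> balanceable K D)"

definition verts :: "'a multiset set \<Rightarrow> 'a set" where
  "verts C = (\<Union>e\<in>C. set_mset e)"

text \<open>Edges of the cycle through the distinct vertices vs (in cyclic order).
  Length 1 gives a loop.\<close>
definition cycle_edges :: "'a list \<Rightarrow> 'a multiset set" where
  "cycle_edges vs = {{#vs ! i, vs ! ((i + 1) mod length vs)#} | i. i < length vs}"

definition is_cycle :: "'a multiset set \<Rightarrow> nat \<Rightarrow> bool" where
  "is_cycle C m \<longleftrightarrow> (m = 1 \<or> m \<ge> 3) \<and>
     (\<exists>vs. distinct vs \<and> length vs = m \<and> C = cycle_edges vs)"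

definition is_odd_cycle :: "'a multiset set \<Rightarrow> bool" where
  "is_odd_cycle C \<longleftrightarrow> (\<exists>m. odd m \<and> is_cycle C m)"

definition is_even_cycle :: "'a multiset set \<Rightarrow> bool" where
  "is_even_cycle C \<longleftrightarrow> (\<exists>m. even m \<and> is_cycle C m)"

definition path_edges :: "'a list \<Rightarrow> 'a multiset set" where
  "path_edges ps = {{#ps ! i, ps ! (i + 1)#} | i. i + 1 < length ps}"

definition two_odd_cycles_one_vertex :: "'a multiset set \<Rightarrow> bool" where
  "two_odd_cycles_one_vertex C \<longleftrightarrow>
     (\<exists>C1 C2. is_odd_cycle C1 \<and> is_odd_cycle C2 \<and> C1 \<inter> C2 = {} \<and>
        card (verts C1 \<inter> verts C2) = 1 \<and> C = C1 \<union> C2)"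

definition two_disjoint_odd_cycles :: "'a multiset set \<Rightarrow> bool" where
  "two_disjoint_odd_cycles C \<longleftrightarrow>
     (\<exists>C1 C2. is_odd_cycle C1 \<and> is_odd_cycle C2 \<and>
        verts C1 \<inter> verts C2 = {} \<and> C = C1 \<union> C2)"

definition odd_cycles_with_path :: "'a multiset set \<Rightarrow> bool" where
  "odd_cycles_with_path C \<longleftrightarrow>
     (\<exists>C1 C2 ps. is_odd_cycle C1 \<and> is_odd_cycle C2 \<and>
        verts C1 \<inter> verts C2 = {} \<and>
        distinct ps \<and> length ps \<ge> 2 \<and>
        hd ps \<in> verts C1 \<and> last ps \<in> verts C2 \<and>
        (\<forall>i. 0 < i \<and> i + 1 < length ps \<longrightarrow> ps ! i \<notin> verts C1 \<union> verts C2) \<and>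
        C = C1 \<union> C2 \<union> path_edges ps)"

end

theory Submission
  imports Defs
begin

text \<open>A weighting is balanced iff it is a nowhere vanishing solution of a homogeneous linear system,
  so a complex is minimal as soon as its solutions are the multiples of one nowhere vanishing
  solution. Balancing at a vertex of degree two makes the weights of its two edges opposite, so along
  a cycle or path the weights alternate. Around an even cycle this balances everything; an odd
  cycle leaves twice its first weight at the vertex where it closes. Two odd cycles sharing that
  vertex cancel each other with weights of opposite sign, two disjoint ones cancel exactly when
  \<open>2 = 0\<close>, and otherwise a path of alternating weights \<open>-2\<close> joining their closing vertices
  cancels both. In each case the solution is unique up to scaling.

  Conversely, a balanced complex has no pendant edge. Following a longest path, both ends have a
  further edge back into the path, and these chords cut off an even cycle, two odd cycles sharing a
  vertex, or two odd cycles joined by a path, unless the path closes into an odd cycle carrying all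
  edges at its vertices. Minimality then makes the complex equal to the configuration found; an
  isolated odd cycle forces \<open>2 = 0\<close> and, as the rest of the complex still carries an odd cycle,
  two disjoint odd cycles.\<close>

lemma add_mset_pair_eq_iff: "{#a, b#} = {#c, d#} \<longleftrightarrow> a = c \<and> b = d \<or> a = d \<and> b = c"
  by (auto simp: add_eq_conv_ex)

lemma count_pair: "count {#a, b#} x = of_bool (a = x) + of_bool (b = x)"
  by simp

lemma nth_ne_hd: "distinct vs \<Longrightarrow> 0 < t \<Longrightarrow> t < length vs \<Longrightarrow> vs ! t \<noteq> hd vs"
  by (cases vs) (auto simp: nth_eq_iff_index_eq)

lemma last_take_Suc: "i < length xs \<Longrightarrow> last (take (Suc i) xs) = xs ! i"
  by (simp add: take_Suc_conv_app_nth)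

lemma set_drop_take:
  assumes "k \<le> length xs"
  shows "set (drop j (take k xs)) = (!) xs ` {j..<k}"
proof (intro equalityI subsetI)
  fix x assume "x \<in> set (drop j (take k xs))"
  then obtain b where "b < k - j" "x = xs ! (j + b)" using assms by (auto simp: in_set_conv_nth)
  then show "x \<in> (!) xs ` {j..<k}" by force
next
  fix x assume "x \<in> (!) xs ` {j..<k}"
  then obtain a where "j \<le> a" "a < k" "x = xs ! a" by auto
  then show "x \<in> set (drop j (take k xs))"
    using assms unfolding in_set_conv_nth by (intro exI[of _ "a - j"]) auto
qed

lemma nth_image_Int:
  assumes "distinct xs" "A \<subseteq> {..<length xs}" "B \<subseteq> {..<length xs}"
  shows "(!) xs ` A \<inter> (!) xs ` B = (!) xs ` (A \<inter> B)"
  using inj_on_image_Int[OF inj_on_nth[of xs "{..<length xs}"] assms(2,3)] assms(1) by simp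

section \<open>Balancing as a linear condition\<close>

definition boundary :: "'a multiset set \<Rightarrow> ('a multiset \<Rightarrow> 'k::field) \<Rightarrow> 'a \<Rightarrow> 'k" where
  "boundary C f x = (\<Sum>e\<in>C. of_nat (count e x) * f e)"

definition balances :: "'a multiset set \<Rightarrow> ('a multiset \<Rightarrow> 'k::field) \<Rightarrow> bool" where
  "balances C f \<longleftrightarrow> sum f C = 0 \<and> (\<forall>x. boundary C f x = 0)"

lemma balanced_weighting_iff:
  "balanced_weighting C w \<longleftrightarrow> (\<forall>e\<in>C. w e \<noteq> 0) \<and> balances C w"
  unfolding balanced_weighting_def balances_def boundary_def by blast

lemma boundary_union:
  "finite C \<Longrightarrow> finite D \<Longrightarrow> C \<inter> D = {} \<Longrightarrow> boundary (C \<union> D) f x = boundary C f x + boundary D f x"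
  unfolding boundary_def by (rule sum.union_disjoint)

lemma boundary_cong: "(\<And>e. e \<in> C \<Longrightarrow> f e = g e) \<Longrightarrow> boundary C f x = boundary C g x"
  unfolding boundary_def by simp

lemma boundary_local:
  assumes "finite C" "D \<subseteq> C" "\<And>e. e \<in> C \<Longrightarrow> x \<in># e \<Longrightarrow> e \<in> D"
  shows "boundary C f x = boundary D f x"
  unfolding boundary_def
proof (rule sum.mono_neutral_right[OF assms(1,2)], intro ballI)
  fix e assume "e \<in> C - D"
  then have "count e x = 0" using assms(3) by (auto simp: count_eq_zero_iff)
  then show "of_nat (count e x) * f e = 0" by simp
qed

lemma set_mset_subset_verts: "e \<in> C \<Longrightarrow> set_mset e \<subseteq> verts C"
  unfolding verts_def by blast

lemma verts_Un [simp]: "verts (C \<union> D) = verts C \<union> verts D"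
  unfolding verts_def by blast

lemma verts_mono: "C \<subseteq> D \<Longrightarrow> verts C \<subseteq> verts D"
  unfolding verts_def by blast

lemma boundary_outside_verts: "x \<notin> verts C \<Longrightarrow> boundary C f x = 0"
  unfolding boundary_def verts_def by (auto simp: not_in_iff intro!: sum.neutral)

lemma balances_extend_zero:
  assumes "finite C" "D \<subseteq> C" "balances D f"
  shows "balances C (\<lambda>e. if e \<in> D then f e else 0)"
proof -
  have "(\<Sum>e\<in>C. g e * (if e \<in> D then f e else 0)) = (\<Sum>e\<in>D. g e * f e)" for g :: "_ \<Rightarrow> 'b"
    by (subst sum.mono_neutral_right[OF assms(1,2)]) auto
  from this[of "\<lambda>_. 1"] this[of "\<lambda>e. of_nat (count e _)"] show ?thesis
    using assms(3) unfolding balances_def boundary_def by simp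
qed

text \<open>A balancing of a proper subcomplex, extended by zero, solves the system on \<open>C\<close> but vanishes
  somewhere, so it cannot be a multiple of the nowhere vanishing \<open>w\<close>.\<close>
lemma minimal_complexI:
  fixes w :: "'a multiset \<Rightarrow> 'k::field"
  assumes fin: "finite C" and ne: "C \<noteq> {}" and w: "balanced_weighting C w"
    and unique: "\<And>f :: 'a multiset \<Rightarrow> 'k. balances C f \<Longrightarrow> \<exists>c. \<forall>e\<in>C. f e = c * w e"
  shows "minimal_complex TYPE('k) C"
  unfolding minimal_complex_def
proof (intro conjI allI impI)
  show "balanceable TYPE('k) C"
    unfolding balanceable_def using w by blast
  fix D assume D: "D \<subseteq> C \<and> D \<noteq> {} \<and> D \<noteq> C"
  show "\<not> balanceable TYPE('k) D"
  proof
    assume "balanceable TYPE('k) D"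
    then obtain f :: "'a multiset \<Rightarrow> 'k" where f: "balanced_weighting D f"
      unfolding balanceable_def by blast
    then have "balances C (\<lambda>e. if e \<in> D then f e else 0)"
      using balances_extend_zero[OF fin] D by (auto simp: balanced_weighting_iff)
    then obtain c where c: "\<forall>e\<in>C. (if e \<in> D then f e else 0) = c * w e"
      using unique by blast
    obtain d e where d: "d \<in> D" and e: "e \<in> C - D" using D by blast
    have "c \<noteq> 0" using c d D f by (force simp: balanced_weighting_iff)
    then show False using c e w by (force simp: balanced_weighting_iff)
  qed
qed (use ne in simp)

lemma minimal_complex_subset_eq:
  "minimal_complex K C \<Longrightarrow> D \<subseteq> C \<Longrightarrow> minimal_complex K D \<Longrightarrow> D = C"
  unfolding minimal_complex_def by blast

lemma two_eq_zero_iff_CHAR: "(2::'k::field) = 0 \<longleftrightarrow> CHAR('k) = 2"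
proof
  assume "(2::'k) = 0"
  then have "CHAR('k) dvd 2"
    using of_nat_eq_0_iff_char_dvd[of 2, where 'a='k] by simp
  moreover have "CHAR('k) \<noteq> 1" by simp
  ultimately show "CHAR('k) = 2"
    using dvd_imp_le[of "CHAR('k)" 2] by (cases "CHAR('k)") auto
qed (metis of_nat_CHAR of_nat_numeral)

section \<open>Alternating weights on cycles and paths\<close>

definition simple_cycle :: "'a list \<Rightarrow> bool" where
  "simple_cycle vs \<longleftrightarrow> distinct vs \<and> vs \<noteq> [] \<and> length vs \<noteq> 2"

definition cycle_edge :: "'a list \<Rightarrow> nat \<Rightarrow> 'a multiset" where
  "cycle_edge vs i = {#vs ! i, vs ! ((i + 1) mod length vs)#}"

lemma cycle_edges_conv: "cycle_edges vs = cycle_edge vs ` {..<length vs}"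
  unfolding cycle_edges_def cycle_edge_def by auto

lemma finite_cycle_edges [simp]: "finite (cycle_edges vs)"
  unfolding cycle_edges_conv by simp

lemma cycle_edge_in_cycle_edges: "i < length vs \<Longrightarrow> cycle_edge vs i \<in> cycle_edges vs"
  unfolding cycle_edges_conv by simp

lemma simple_cycle_length: "simple_cycle vs \<Longrightarrow> length vs = 1 \<or> 3 \<le> length vs"
  unfolding simple_cycle_def by (cases "length vs") auto

lemma is_cycle_iff: "is_cycle C m \<longleftrightarrow> (\<exists>vs. simple_cycle vs \<and> length vs = m \<and> C = cycle_edges vs)"
proof
  assume "is_cycle C m"
  then show "\<exists>vs. simple_cycle vs \<and> length vs = m \<and> C = cycle_edges vs"
    unfolding is_cycle_def simple_cycle_def by auto
next
  assume "\<exists>vs. simple_cycle vs \<and> length vs = m \<and> C = cycle_edges vs"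
  then obtain vs where "simple_cycle vs" "length vs = m" "C = cycle_edges vs" by blast
  then show "is_cycle C m"
    unfolding is_cycle_def using simple_cycle_length[of vs] by (auto simp: simple_cycle_def)
qed

lemma simple_cycle_singleton [simp]: "simple_cycle [a]"
  unfolding simple_cycle_def by simp

lemma cycle_edges_singleton [simp]: "cycle_edges [a] = {{#a, a#}}"
  unfolding cycle_edges_def by auto

lemma cycle_edges_nonempty: "simple_cycle vs \<Longrightarrow> cycle_edges vs \<noteq> {}"
  unfolding simple_cycle_def cycle_edges_conv by force

lemma inj_on_cycle_edge:
  assumes "simple_cycle vs"
  shows "inj_on (cycle_edge vs) {..<length vs}"
proof
  fix i j assume i: "i \<in> {..<length vs}" and j: "j \<in> {..<length vs}"
    and eq: "cycle_edge vs i = cycle_edge vs j"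
  let ?m = "length vs"
  have d: "distinct vs" using assms unfolding simple_cycle_def by blast
  have "0 < ?m" using i by auto
  then have succ: "(i + 1) mod ?m < ?m" "(j + 1) mod ?m < ?m" by simp_all
  show "i = j"
  proof (rule ccontr)
    assume "i \<noteq> j"
    then have "vs ! i \<noteq> vs ! j" using d i j by (simp add: nth_eq_iff_index_eq)
    with eq have "vs ! i = vs ! ((j + 1) mod ?m)" "vs ! ((i + 1) mod ?m) = vs ! j"
      by (auto simp: cycle_edge_def add_mset_pair_eq_iff)
    then have "(j + 1) mod ?m = i" "(i + 1) mod ?m = j"
      using d i j succ by (simp_all add: nth_eq_iff_index_eq)
    moreover have "3 \<le> ?m" using simple_cycle_length[OF assms] i j \<open>i \<noteq> j\<close> by auto
    ultimately show False using i j by (cases "i + 1 = ?m"; cases "j + 1 = ?m") auto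
  qed
qed

lemma sum_cycle_edges:
  "simple_cycle vs \<Longrightarrow> sum f (cycle_edges vs) = (\<Sum>i<length vs. f (cycle_edge vs i))"
  unfolding cycle_edges_conv by (simp add: sum.reindex inj_on_cycle_edge)

lemma verts_cycle_edges: "verts (cycle_edges vs) = set vs"
proof (cases "vs = []")
  case False
  have "verts (cycle_edges vs) = (\<Union>i<length vs. {vs ! i, vs ! ((i + 1) mod length vs)})"
    unfolding verts_def cycle_edges_conv cycle_edge_def by auto
  also have "\<dots> = set vs"
  proof
    have "0 < length vs" using False by simp
    then show "(\<Union>i<length vs. {vs ! i, vs ! ((i + 1) mod length vs)}) \<subseteq> set vs" by auto
  qed (auto simp: in_set_conv_nth)
  finally show ?thesis .
qed (simp add: cycle_edges_def verts_def)

lemma cycle_edges_disjoint: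
  assumes "set u \<inter> set v = {}"
  shows "cycle_edges u \<inter> cycle_edges v = {}"
proof (intro equals0I)
  fix e assume e: "e \<in> cycle_edges u \<inter> cycle_edges v"
  then have "set_mset e \<subseteq> set u \<inter> set v"
    using set_mset_subset_verts[of e "cycle_edges u"] set_mset_subset_verts[of e "cycle_edges v"]
    by (simp add: verts_cycle_edges)
  moreover have "e \<noteq> {#}" using e unfolding cycle_edges_def by auto
  ultimately show False using assms by auto
qed

lemma loop_in_cycle_edges:
  assumes "simple_cycle vs" "{#x, x#} \<in> cycle_edges vs"
  shows "length vs = 1"
proof (rule ccontr)
  assume "length vs \<noteq> 1"
  then have m: "3 \<le> length vs" using simple_cycle_length[OF assms(1)] by simp
  obtain i where i: "i < length vs" "{#x, x#} = cycle_edge vs i"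
    using assms(2) unfolding cycle_edges_conv by blast
  then have "vs ! i = vs ! ((i + 1) mod length vs)"
    by (auto simp: cycle_edge_def add_mset_pair_eq_iff)
  moreover have "0 < length vs" using i(1) by linarith
  then have "(i + 1) mod length vs < length vs" by simp
  ultimately have "i = (i + 1) mod length vs"
    using assms(1) i(1) unfolding simple_cycle_def by (simp add: nth_eq_iff_index_eq)
  then show False using i(1) m by (cases "i + 1 = length vs") simp_all
qed

text \<open>The predecessor of index \<open>t\<close> on the cycle is \<open>(t + m - 1) mod m\<close>; the extra \<open>m\<close>
  avoids truncated subtraction at \<open>t = 0\<close>.\<close>
lemma pred_mod_eq: "t < (m::nat) \<Longrightarrow> (t + m - 1) mod m = (if t = 0 then m - 1 else t - 1)"
  by (cases t) simp_all

lemma succ_mod_eq_iff: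
  fixes i t m :: nat
  assumes "i < m" "t < m"
  shows "(i + 1) mod m = t \<longleftrightarrow> i = (t + m - 1) mod m"
proof -
  have "(i + 1) mod m = (if i + 1 = m then 0 else i + 1)" using assms(1) by simp
  then show ?thesis unfolding pred_mod_eq[OF assms(2)] using assms by auto
qed

lemma boundary_cycle_edges_nth:
  assumes vs: "simple_cycle vs" and t: "t < length vs"
  shows "boundary (cycle_edges vs) f (vs ! t) =
    f (cycle_edge vs t) + f (cycle_edge vs ((t + length vs - 1) mod length vs))"
proof -
  let ?m = "length vs" and ?p = "(t + length vs - 1) mod length vs"
  have m: "0 < ?m" using t by linarith
  have d: "distinct vs" using vs unfolding simple_cycle_def by blast
  have "count (cycle_edge vs i) (vs ! t) = of_bool (i = t) + of_bool (i = ?p)"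
    if i: "i < ?m" for i
  proof -
    have "(i + 1) mod ?m < ?m" using m by simp
    then have "vs ! ((i + 1) mod ?m) = vs ! t \<longleftrightarrow> i = ?p"
      using d t i succ_mod_eq_iff[OF i t] nth_eq_iff_index_eq by metis
    moreover have "vs ! i = vs ! t \<longleftrightarrow> i = t"
      using d t i by (simp add: nth_eq_iff_index_eq)
    ultimately show ?thesis unfolding cycle_edge_def count_pair by (simp only:)
  qed
  then have "boundary (cycle_edges vs) f (vs ! t) =
      (\<Sum>i<?m. of_bool (i = t) * f (cycle_edge vs i) + of_bool (i = ?p) * f (cycle_edge vs i))"
    unfolding boundary_def sum_cycle_edges[OF vs] by (intro sum.cong) (simp_all add: distrib_right)
  also have "\<dots> = f (cycle_edge vs t) + f (cycle_edge vs ?p)"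
    using t m by (simp add: sum.distrib of_bool_def if_distrib[of "\<lambda>x. x * _"] cong: if_cong)
  finally show ?thesis .
qed

definition alt_cycle_weight :: "'a list \<Rightarrow> 'k::field \<Rightarrow> 'a multiset \<Rightarrow> 'k" where
  "alt_cycle_weight vs a e = a * (-1) ^ the_inv_into {..<length vs} (cycle_edge vs) e"

lemma alt_cycle_weight_cycle_edge:
  "simple_cycle vs \<Longrightarrow> i < length vs \<Longrightarrow> alt_cycle_weight vs a (cycle_edge vs i) = a * (-1) ^ i"
  unfolding alt_cycle_weight_def by (simp add: the_inv_into_f_f inj_on_cycle_edge)

lemma alt_cycle_weight_nonzero: "a \<noteq> 0 \<Longrightarrow> alt_cycle_weight vs a e \<noteq> 0"
  unfolding alt_cycle_weight_def by simp

lemma alt_cycle_weight_mult: "alt_cycle_weight vs (c * a) e = c * alt_cycle_weight vs a e"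
  unfolding alt_cycle_weight_def by simp

lemma sum_neg_one_power: "(\<Sum>i<m. (-1::'k::field) ^ i) = (if even m then 0 else 1)"
  by (induction m) auto

lemma sum_alt_cycle_weight:
  "simple_cycle vs \<Longrightarrow> sum (alt_cycle_weight vs a) (cycle_edges vs) = (if even (length vs) then 0 else a)"
  by (simp add: sum_cycle_edges alt_cycle_weight_cycle_edge flip: sum_distrib_left)
     (simp add: sum_neg_one_power)

text \<open>The alternating signs cancel at every vertex except the head of an odd cycle, where the
  first and the last edge carry the same sign.\<close>
lemma boundary_alt_cycle_weight:
  assumes vs: "simple_cycle vs"
  shows "boundary (cycle_edges vs) (alt_cycle_weight vs a) x =
    (if x = hd vs \<and> odd (length vs) then 2 * a else 0)"
proof (cases "x \<in> set vs")
  case False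
  moreover have "vs \<noteq> []" using vs unfolding simple_cycle_def by blast
  ultimately have "x \<noteq> hd vs" by auto
  with False show ?thesis by (simp add: boundary_outside_verts verts_cycle_edges)
next
  case True
  let ?m = "length vs"
  obtain t where t: "t < ?m" "x = vs ! t" using True by (auto simp: in_set_conv_nth)
  have hd: "x = hd vs \<longleftrightarrow> t = 0"
    using t vs unfolding simple_cycle_def by (simp add: hd_conv_nth nth_eq_iff_index_eq)
  have m: "0 < ?m" using t by linarith
  then have "(t + ?m - 1) mod ?m < ?m" by simp
  then have "boundary (cycle_edges vs) (alt_cycle_weight vs a) x =
      a * (-1) ^ t + a * (-1) ^ ((t + ?m - 1) mod ?m)"
    using t by (simp add: boundary_cycle_edges_nth[OF vs] alt_cycle_weight_cycle_edge[OF vs])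
  also have "\<dots> = (if t = 0 \<and> odd ?m then 2 * a else 0)"
  proof (cases t)
    case 0
    then show ?thesis using pred_mod_eq[OF t(1)] m by (cases ?m) auto
  next
    case (Suc s)
    then show ?thesis using pred_mod_eq[OF t(1)] by simp
  qed
  finally show ?thesis using hd by simp
qed

lemma alternating_on_cycle:
  assumes vs: "simple_cycle vs" and C: "finite C" "cycle_edges vs \<subseteq> C"
    and f: "\<And>x. boundary C f x = 0"
    and unshared: "\<And>t. 0 < t \<Longrightarrow> t < length vs \<Longrightarrow> vs ! t \<notin> verts (C - cycle_edges vs)"
    and e: "e \<in> cycle_edges vs"
  shows "f e = alt_cycle_weight vs (f (cycle_edge vs 0)) e"
proof -
  let ?m = "length vs"
  have step: "f (cycle_edge vs t) = - f (cycle_edge vs (t - 1))" if t: "0 < t" "t < ?m" for t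
  proof -
    have "boundary (cycle_edges vs) f (vs ! t) = boundary C f (vs ! t)"
      using unshared[OF t] C unfolding verts_def by (intro boundary_local[symmetric]) auto
    moreover have "boundary (cycle_edges vs) f (vs ! t) = f (cycle_edge vs t) + f (cycle_edge vs (t - 1))"
      using boundary_cycle_edges_nth[OF vs t(2)] pred_mod_eq[OF t(2)] t(1) by simp
    ultimately show ?thesis using f by (simp add: eq_neg_iff_add_eq_0)
  qed
  have alt: "f (cycle_edge vs t) = (-1) ^ t * f (cycle_edge vs 0)" if "t < ?m" for t
    using that
  proof (induction t)
    case (Suc t)
    then show ?case using step[of "Suc t"] by simp
  qed simp
  obtain i where i: "i < ?m" "e = cycle_edge vs i"
    using e unfolding cycle_edges_conv by blast
  show ?thesis
    unfolding i(2) alt_cycle_weight_cycle_edge[OF vs i(1)] alt[OF i(1)] by (rule mult.commute)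
qed

lemma alternating_on_cycle_in_Un:
  assumes vs: "simple_cycle vs" and D: "finite D"
    and f: "\<And>x. boundary (cycle_edges vs \<union> D) f x = 0"
    and meet: "set vs \<inter> verts D \<subseteq> {hd vs}"
    and e: "e \<in> cycle_edges vs"
  shows "f e = alt_cycle_weight vs (f (cycle_edge vs 0)) e"
proof (rule alternating_on_cycle[OF vs _ _ f _ e])
  fix t assume t: "0 < t" "t < length vs"
  have "vs ! t \<noteq> hd vs" using vs t unfolding simple_cycle_def by (simp add: nth_ne_hd)
  then have "vs ! t \<notin> verts D" using meet nth_mem[OF t(2)] by auto
  then show "vs ! t \<notin> verts (cycle_edges vs \<union> D - cycle_edges vs)"
    using verts_mono[of "cycle_edges vs \<union> D - cycle_edges vs" D] by blast
qed (use D in auto)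

lemma cycle_edge_rotate:
  assumes "i < length vs"
  shows "cycle_edge (rotate n vs) i = cycle_edge vs ((n + i) mod length vs)"
proof -
  have "0 < length vs" using assms by linarith
  then show ?thesis
    using assms unfolding cycle_edge_def by (simp add: nth_rotate mod_add_right_eq mod_Suc_eq)
qed

lemma cycle_edges_rotate_subset: "cycle_edges (rotate n vs) \<subseteq> cycle_edges vs"
proof
  fix e assume "e \<in> cycle_edges (rotate n vs)"
  then obtain i where i: "i < length vs" "e = cycle_edge (rotate n vs) i"
    unfolding cycle_edges_conv by auto
  then have "0 < length vs" by linarith
  then have "(n + i) mod length vs < length vs" by simp
  then show "e \<in> cycle_edges vs"
    using i by (simp add: cycle_edge_rotate cycle_edge_in_cycle_edges)
qed

lemma cycle_edges_rotate [simp]: "cycle_edges (rotate n vs) = cycle_edges vs"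
proof (rule antisym[OF cycle_edges_rotate_subset])
  let ?m = "length vs"
  have "rotate (?m - n mod ?m) (rotate n vs) = vs"
  proof (cases "vs = []")
    case False
    then have "0 < ?m" by simp
    then have "?m - n mod ?m + n = ?m + (n - n mod ?m)"
      using mod_less_eq_dividend[of n ?m] mod_less_divisor[of ?m n] by linarith
    also have "\<dots> = ?m + ?m * (n div ?m)" by (simp add: minus_mod_eq_mult_div)
    finally have "(?m - n mod ?m + n) mod ?m = 0" by simp
    then show ?thesis by (simp add: rotate_rotate)
  qed simp
  then show "cycle_edges vs \<subseteq> cycle_edges (rotate n vs)"
    using cycle_edges_rotate_subset[of "?m - n mod ?m" "rotate n vs"] by simp
qed

lemma simple_cycle_rotate [simp]: "simple_cycle (rotate n vs) \<longleftrightarrow> simple_cycle vs"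
  unfolding simple_cycle_def by simp

lemma odd_cycle_through:
  assumes "is_odd_cycle C" "x \<in> verts C"
  obtains vs where "simple_cycle vs" "odd (length vs)" "C = cycle_edges vs" "hd vs = x"
proof -
  obtain vs where vs: "simple_cycle vs" "odd (length vs)" "C = cycle_edges vs"
    using assms(1) unfolding is_odd_cycle_def is_cycle_iff by blast
  then obtain t where "t < length vs" "vs ! t = x"
    using assms(2) by (auto simp: verts_cycle_edges in_set_conv_nth)
  moreover have "vs \<noteq> []" using vs unfolding simple_cycle_def by blast
  ultimately have "hd (rotate t vs) = x" by (simp add: hd_rotate_conv_nth)
  with vs show thesis by (intro that[of "rotate t vs"]) simp_all
qed

lemma is_odd_cycle_cycle_edges:
  "simple_cycle vs \<Longrightarrow> odd (length vs) \<Longrightarrow> is_odd_cycle (cycle_edges vs)"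
  unfolding is_odd_cycle_def is_cycle_iff by blast

lemma is_even_cycle_cycle_edges:
  "simple_cycle vs \<Longrightarrow> even (length vs) \<Longrightarrow> is_even_cycle (cycle_edges vs)"
  unfolding is_even_cycle_def is_cycle_iff by blast

definition path_edge :: "'a list \<Rightarrow> nat \<Rightarrow> 'a multiset" where
  "path_edge ps i = {#ps ! i, ps ! Suc i#}"

lemma path_edges_conv: "path_edges ps = path_edge ps ` {..<length ps - 1}"
  unfolding path_edges_def path_edge_def by force

lemma finite_path_edges [simp]: "finite (path_edges ps)"
  unfolding path_edges_conv by simp

lemma inj_on_path_edge:
  assumes d: "distinct ps"
  shows "inj_on (path_edge ps) {..<length ps - 1}"
proof
  fix i j assume i: "i \<in> {..<length ps - 1}" and j: "j \<in> {..<length ps - 1}"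
    and eq: "path_edge ps i = path_edge ps j"
  have "ps ! i = ps ! j \<and> ps ! Suc i = ps ! Suc j \<or> ps ! i = ps ! Suc j \<and> ps ! Suc i = ps ! j"
    using eq unfolding path_edge_def add_mset_pair_eq_iff .
  moreover have "Suc i < length ps" "Suc j < length ps" using i j by auto
  ultimately show "i = j"
    using d nth_eq_iff_index_eq[OF d, of i j] nth_eq_iff_index_eq[OF d, of "Suc i" "Suc j"]
      nth_eq_iff_index_eq[OF d, of i "Suc j"] nth_eq_iff_index_eq[OF d, of "Suc i" j] by auto
qed

lemma sum_path_edges:
  "distinct ps \<Longrightarrow> sum f (path_edges ps) = (\<Sum>i<length ps - 1. f (path_edge ps i))"
  unfolding path_edges_conv by (subst sum.reindex[OF inj_on_path_edge]) simp_all

lemma verts_path_edges: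
  assumes "2 \<le> length ps"
  shows "verts (path_edges ps) = set ps"
proof -
  have "verts (path_edges ps) = (\<Union>i<length ps - 1. {ps ! i, ps ! Suc i})"
    unfolding verts_def path_edges_conv path_edge_def by auto
  also have "\<dots> = set ps"
  proof
    show "set ps \<subseteq> (\<Union>i<length ps - 1. {ps ! i, ps ! Suc i})"
    proof
      fix x assume "x \<in> set ps"
      then obtain t where t: "t < length ps" "x = ps ! t" by (auto simp: in_set_conv_nth)
      show "x \<in> (\<Union>i<length ps - 1. {ps ! i, ps ! Suc i})"
      proof (cases "t < length ps - 1")
        case False
        then have "t = Suc (t - 1)" "t - 1 < length ps - 1" using t assms by auto
        then show ?thesis using t by (intro UN_I[of "t - 1"]) auto
      qed (use t in blast)
    qed
  qed auto
  finally show ?thesis .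
qed

lemma path_edges_not_loop:
  assumes "distinct ps" "e \<in> path_edges ps"
  obtains a b where "a \<noteq> b" "e = {#a, b#}"
proof -
  obtain i where i: "Suc i < length ps" "e = {#ps ! i, ps ! Suc i#}"
    using assms(2) unfolding path_edges_def by auto
  moreover have "ps ! i \<noteq> ps ! Suc i" using assms(1) i(1) by (simp add: nth_eq_iff_index_eq)
  ultimately show thesis using that by blast
qed

lemma boundary_path_edges_nth:
  assumes d: "distinct ps" and t: "t < length ps"
  shows "boundary (path_edges ps) f (ps ! t) =
    (if t < length ps - 1 then f (path_edge ps t) else 0) + (if 0 < t then f (path_edge ps (t - 1)) else 0)"
proof -
  let ?l = "length ps - 1"
  have pred: "Suc i = t \<longleftrightarrow> i = t - 1 \<and> 0 < t" for i by auto
  have "count (path_edge ps i) (ps ! t) = of_bool (i = t) + of_bool (Suc i = t)" if i: "i < ?l" for i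
  proof -
    have "ps ! i = ps ! t \<longleftrightarrow> i = t" "ps ! Suc i = ps ! t \<longleftrightarrow> Suc i = t"
      using d i t by (simp_all add: nth_eq_iff_index_eq)
    then show ?thesis unfolding path_edge_def count_pair by (simp only:)
  qed
  then have "boundary (path_edges ps) f (ps ! t) =
      (\<Sum>i<?l. of_bool (i = t) * f (path_edge ps i) + of_bool (i = t - 1 \<and> 0 < t) * f (path_edge ps i))"
    unfolding boundary_def sum_path_edges[OF d]
    by (intro sum.cong) (simp_all add: distrib_right pred)
  moreover have "0 < t \<Longrightarrow> t - 1 < ?l" using t by linarith
  ultimately show ?thesis
    by (simp add: sum.distrib of_bool_def if_distrib[of "\<lambda>x. x * _"] cong: if_cong)
qed

definition alt_path_weight :: "'a list \<Rightarrow> 'k::field \<Rightarrow> 'a multiset \<Rightarrow> 'k" where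
  "alt_path_weight ps c e = c * (-1) ^ the_inv_into {..<length ps - 1} (path_edge ps) e"

lemma alt_path_weight_path_edge:
  "distinct ps \<Longrightarrow> i < length ps - 1 \<Longrightarrow> alt_path_weight ps c (path_edge ps i) = c * (-1) ^ i"
  unfolding alt_path_weight_def by (subst the_inv_into_f_f[OF inj_on_path_edge]) simp_all

lemma alt_path_weight_nonzero: "c \<noteq> 0 \<Longrightarrow> alt_path_weight ps c e \<noteq> 0"
  unfolding alt_path_weight_def by simp

lemma alt_path_weight_mult: "alt_path_weight ps (a * c) e = a * alt_path_weight ps c e"
  unfolding alt_path_weight_def by simp

lemma sum_alt_path_weight:
  "distinct ps \<Longrightarrow> sum (alt_path_weight ps c) (path_edges ps) = (if even (length ps - 1) then 0 else c)"
  by (simp add: sum_path_edges alt_path_weight_path_edge flip: sum_distrib_left)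
     (simp add: sum_neg_one_power)

lemma boundary_alt_path_weight:
  assumes d: "distinct ps" and l: "2 \<le> length ps"
  shows "boundary (path_edges ps) (alt_path_weight ps c) x =
    (if x = hd ps then c else if x = last ps then c * (-1) ^ length ps else 0)"
proof (cases "x \<in> set ps")
  case False
  moreover have "ps \<noteq> []" using l by auto
  ultimately have "x \<noteq> hd ps" "x \<noteq> last ps" by auto
  with False show ?thesis by (simp add: boundary_outside_verts verts_path_edges[OF l])
next
  case True
  let ?L = "length ps"
  obtain t where t: "t < ?L" "x = ps ! t" using True by (auto simp: in_set_conv_nth)
  have "ps \<noteq> []" using l by auto
  then have ends: "x = hd ps \<longleftrightarrow> t = 0" "x = last ps \<longleftrightarrow> t = ?L - 1"
    using t d by (simp_all add: hd_conv_nth last_conv_nth nth_eq_iff_index_eq)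
  have "t - 1 < ?L - 1" if "0 < t" using that t by linarith
  then have "boundary (path_edges ps) (alt_path_weight ps c) x =
      (if t < ?L - 1 then c * (-1) ^ t else 0) + (if 0 < t then c * (-1) ^ (t - 1) else 0)"
    using t by (simp add: boundary_path_edges_nth[OF d] alt_path_weight_path_edge[OF d])
  also have "\<dots> = (if t = 0 then c else if t = ?L - 1 then c * (-1) ^ ?L else 0)"
  proof -
    consider "t = 0" | "0 < t" "t < ?L - 1" | "0 < t" "t = ?L - 1" using t l by linarith
    then show ?thesis
    proof cases
      case 2
      then obtain k where "t = Suc k" using gr0_implies_Suc by blast
      with 2 show ?thesis by simp
    next
      case 3
      then obtain k where k: "t = Suc k" using gr0_implies_Suc by blast
      with 3 l have "?L = Suc (Suc k)" by simp
      with k 3 show ?thesis by simp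
    qed (use l in simp)
  qed
  finally show ?thesis using ends by simp
qed

lemma alternating_on_path:
  assumes d: "distinct ps" and C: "finite C" "path_edges ps \<subseteq> C"
    and f: "\<And>x. boundary C f x = 0"
    and unshared: "\<And>t. 0 < t \<Longrightarrow> t < length ps - 1 \<Longrightarrow> ps ! t \<notin> verts (C - path_edges ps)"
    and e: "e \<in> path_edges ps"
  shows "f e = alt_path_weight ps (f (path_edge ps 0)) e"
proof -
  have step: "f (path_edge ps t) = - f (path_edge ps (t - 1))" if t: "0 < t" "t < length ps - 1" for t
  proof -
    have "boundary (path_edges ps) f (ps ! t) = boundary C f (ps ! t)"
      using unshared[OF t] C unfolding verts_def by (intro boundary_local[symmetric]) auto
    moreover have "boundary (path_edges ps) f (ps ! t) = f (path_edge ps t) + f (path_edge ps (t - 1))"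
      using boundary_path_edges_nth[OF d, of t f] t by simp
    ultimately show ?thesis using f by (simp add: eq_neg_iff_add_eq_0)
  qed
  have alt: "f (path_edge ps t) = (-1) ^ t * f (path_edge ps 0)" if "t < length ps - 1" for t
    using that
  proof (induction t)
    case (Suc t)
    then show ?case using step[of "Suc t"] by simp
  qed simp
  obtain i where i: "i < length ps - 1" "e = path_edge ps i"
    using e unfolding path_edges_conv by blast
  show ?thesis
    unfolding i(2) alt_path_weight_path_edge[OF d i(1)] alt[OF i(1)] by (rule mult.commute)
qed

section \<open>The four configurations are minimal\<close>

lemma minimal_even_cycle:
  assumes vs: "simple_cycle vs" and even: "even (length vs)"
  shows "minimal_complex TYPE('k::field) (cycle_edges vs)"
proof (rule minimal_complexI[where w = "alt_cycle_weight vs 1"])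
  show "balanced_weighting (cycle_edges vs) (alt_cycle_weight vs (1::'k))"
    using vs even by (simp add: balanced_weighting_iff balances_def alt_cycle_weight_nonzero
        sum_alt_cycle_weight boundary_alt_cycle_weight)
  fix f :: "'a multiset \<Rightarrow> 'k" assume f: "balances (cycle_edges vs) f"
  let ?a = "f (cycle_edge vs 0)"
  have "f e = alt_cycle_weight vs ?a e" if "e \<in> cycle_edges vs" for e
    using f by (intro alternating_on_cycle[OF vs _ order_refl _ _ that])
      (simp_all add: balances_def verts_def)
  then show "\<exists>c. \<forall>e\<in>cycle_edges vs. f e = c * alt_cycle_weight vs 1 e"
    using alt_cycle_weight_mult[of vs ?a 1] by auto
qed (use vs in \<open>simp_all add: cycle_edges_nonempty\<close>)

text \<open>Weight \<open>1\<close> alternating around \<open>u\<close> and \<open>-1\<close> around \<open>v\<close>: the only unbalanced vertices are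
  the heads, with boundary \<open>2\<close> and \<open>-2\<close>; they cancel if the heads coincide or \<open>2 = 0\<close>.\<close>
lemma minimal_odd_cycle_pair:
  fixes u v :: "'a list"
  assumes u: "simple_cycle u" "odd (length u)" and v: "simple_cycle v" "odd (length v)"
    and disjoint: "cycle_edges u \<inter> cycle_edges v = {}"
    and meet: "set u \<inter> set v \<subseteq> {hd u} \<inter> {hd v}"
    and heads: "hd u = hd v \<or> (2::'k::field) = 0"
  shows "minimal_complex TYPE('k) (cycle_edges u \<union> cycle_edges v)"
proof -
  let ?U = "cycle_edges u" and ?V = "cycle_edges v"
  define w :: "'a multiset \<Rightarrow> 'k" where
    "w e = (if e \<in> ?U then alt_cycle_weight u 1 e else alt_cycle_weight v (-1) e)" for e
  have split: "boundary (?U \<union> ?V) g x = boundary ?U g x + boundary ?V g x"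
    "sum g (?U \<union> ?V) = sum g ?U + sum g ?V" for g :: "'a multiset \<Rightarrow> 'k" and x
    using disjoint by (simp_all add: boundary_union sum.union_disjoint)
  have "w e = alt_cycle_weight u 1 e" if "e \<in> ?U" for e
    using that by (simp add: w_def)
  then have wU: "boundary ?U w x = boundary ?U (alt_cycle_weight u 1) x"
    "sum w ?U = sum (alt_cycle_weight u 1) ?U" for x
    by (simp_all cong: boundary_cong sum.cong)
  have "w e = alt_cycle_weight v (-1) e" if "e \<in> ?V" for e
    using that disjoint by (auto simp: w_def)
  then have wV: "boundary ?V w x = boundary ?V (alt_cycle_weight v (-1)) x"
    "sum w ?V = sum (alt_cycle_weight v (-1)) ?V" for x
    by (simp_all cong: boundary_cong sum.cong)
  show ?thesis
  proof (rule minimal_complexI[where w = w])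
    show "balanced_weighting (?U \<union> ?V) w"
      unfolding balanced_weighting_iff balances_def split wU wV
      using u v heads by (auto simp: w_def alt_cycle_weight_nonzero sum_alt_cycle_weight
          boundary_alt_cycle_weight)
    fix f :: "'a multiset \<Rightarrow> 'k" assume f: "balances (?U \<union> ?V) f"
    let ?a = "f (cycle_edge u 0)" and ?b = "f (cycle_edge v 0)"
    have fU: "f e = alt_cycle_weight u ?a e" if "e \<in> ?U" for e
      by (rule alternating_on_cycle_in_Un[OF u(1) finite_cycle_edges _ _ that])
        (use f meet in \<open>auto simp: balances_def verts_cycle_edges\<close>)
    have fV: "f e = alt_cycle_weight v ?b e" if "e \<in> ?V" for e
      by (rule alternating_on_cycle_in_Un[OF v(1) finite_cycle_edges _ _ that])
        (use f meet in \<open>auto simp: balances_def verts_cycle_edges Un_commute\<close>)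
    have "0 = sum f ?U + sum f ?V"
      using f unfolding balances_def split by simp
    also have "\<dots> = ?a + ?b"
      using u v by (simp add: fU fV sum_alt_cycle_weight cong: sum.cong)
    finally have b: "?b = ?a * -1" by (simp add: eq_neg_iff_add_eq_0 add.commute)
    have "f e = ?a * w e" if "e \<in> ?U \<union> ?V" for e
    proof (cases "e \<in> ?U")
      case True
      then show ?thesis using fU alt_cycle_weight_mult[of u ?a 1 e] by (simp add: w_def)
    next
      case False
      then show ?thesis using that fV b alt_cycle_weight_mult[of v ?a "-1" e] by (simp add: w_def)
    qed
    then show "\<exists>c. \<forall>e\<in>?U \<union> ?V. f e = c * w e" by blast
  qed (use u in \<open>simp_all add: cycle_edges_nonempty\<close>)
qed

text \<open>The cycles are rotated so that the path attaches to them at their heads.\<close>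
locale dumbbell =
  fixes u v ps :: "'a list"
  assumes u: "simple_cycle u" "odd (length u)"
    and v: "simple_cycle v" "odd (length v)"
    and path: "distinct ps" "2 \<le> length ps"
    and path_ends: "hd ps = hd u" "last ps = hd v"
    and cycles_disjoint: "set u \<inter> set v = {}"
    and path_meets_u: "set ps \<inter> set u = {hd u}"
    and path_meets_v: "set ps \<inter> set v = {hd v}"
begin

lemma heads_distinct: "hd u \<noteq> hd v"
proof -
  have "hd u \<in> set u" "hd v \<in> set v" using u(1) v(1) unfolding simple_cycle_def by simp_all
  then show ?thesis using cycles_disjoint by auto
qed

lemma path_internal:
  assumes "0 < t" "t < length ps - 1"
  shows "ps ! t \<notin> set u \<union> set v"
proof -
  have "ps \<noteq> []" using path(2) by auto
  then have "ps ! t \<noteq> hd ps" "ps ! t \<noteq> last ps"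
    using assms path(1) by (simp_all add: nth_ne_hd last_conv_nth nth_eq_iff_index_eq)
  moreover have "ps ! t \<in> set ps" using assms by simp
  ultimately show ?thesis
    using path_ends path_meets_u path_meets_v by (metis Int_iff Un_iff singletonD)
qed

lemma edges_disjoint:
  "cycle_edges u \<inter> cycle_edges v = {}"
  "(cycle_edges u \<union> cycle_edges v) \<inter> path_edges ps = {}"
proof -
  show "cycle_edges u \<inter> cycle_edges v = {}"
    using cycles_disjoint by (rule cycle_edges_disjoint)
  have "e \<notin> path_edges ps" if "e \<in> cycle_edges w" "set ps \<inter> set w = {hd w}" for e w
  proof
    assume e: "e \<in> path_edges ps"
    then obtain a b where "a \<noteq> b" "e = {#a, b#}" by (rule path_edges_not_loop[OF path(1)])
    moreover have "set_mset e \<subseteq> set ps \<inter> set w"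
      using set_mset_subset_verts[OF e] set_mset_subset_verts[OF that(1)]
      by (simp add: verts_path_edges[OF path(2)] verts_cycle_edges)
    ultimately show False using that(2) by auto
  qed
  then show "(cycle_edges u \<union> cycle_edges v) \<inter> path_edges ps = {}"
    using path_meets_u path_meets_v by blast
qed

lemma edges_split:
  fixes g :: "'a multiset \<Rightarrow> 'k::field"
  shows "boundary (cycle_edges u \<union> cycle_edges v \<union> path_edges ps) g x =
      boundary (cycle_edges u) g x + boundary (cycle_edges v) g x + boundary (path_edges ps) g x"
    and "sum g (cycle_edges u \<union> cycle_edges v \<union> path_edges ps) =
      sum g (cycle_edges u) + sum g (cycle_edges v) + sum g (path_edges ps)"
  using edges_disjoint by (simp_all add: boundary_union sum.union_disjoint)

text \<open>Each odd cycle, weighted alternately, leaves twice its first weight at its head; the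
  alternating path of weight \<open>-2\<close> cancels this at both ends.\<close>
definition weight :: "'a multiset \<Rightarrow> 'k::field" where
  "weight e = (if e \<in> cycle_edges u then alt_cycle_weight u 1 e
     else if e \<in> cycle_edges v then alt_cycle_weight v ((-1) ^ length ps) e
     else alt_path_weight ps (-2) e)"

lemma weight_on:
  "e \<in> cycle_edges u \<Longrightarrow> weight e = alt_cycle_weight u 1 e"
  "e \<in> cycle_edges v \<Longrightarrow> weight e = alt_cycle_weight v ((-1) ^ length ps) e"
  "e \<in> path_edges ps \<Longrightarrow> weight e = alt_path_weight ps (-2) e"
  using edges_disjoint by (auto simp: weight_def)

lemma balanced_weighting_weight:
  assumes two: "(2::'k::field) \<noteq> 0"
  shows "balanced_weighting (cycle_edges u \<union> cycle_edges v \<union> path_edges ps) (weight :: _ \<Rightarrow> 'k)"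
proof -
  let ?w = "weight :: _ \<Rightarrow> 'k"
  have "sum ?w (cycle_edges u) + sum ?w (cycle_edges v) + sum ?w (path_edges ps)
      = 1 + (-1) ^ length ps + (if even (length ps - 1) then 0 else -2)"
    using u v path by (simp add: weight_on sum_alt_cycle_weight sum_alt_path_weight cong: sum.cong)
  also have "\<dots> = 0"
    using path(2) by (cases "even (length ps)") auto
  finally have sum: "sum ?w (cycle_edges u) + sum ?w (cycle_edges v) + sum ?w (path_edges ps) = 0" .
  have "boundary (cycle_edges u) ?w x + boundary (cycle_edges v) ?w x + boundary (path_edges ps) ?w x
      = 0" for x
  proof -
    have "boundary (cycle_edges u) ?w x + boundary (cycle_edges v) ?w x + boundary (path_edges ps) ?w x
      = (if x = hd u then 2 else 0) + (if x = hd v then 2 * (-1) ^ length ps else 0)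
        + (if x = hd ps then -2 else if x = last ps then -2 * (-1) ^ length ps else 0)"
      using u v path by (simp add: weight_on boundary_alt_cycle_weight boundary_alt_path_weight
          cong: boundary_cong)
    also have "\<dots> = 0"
      using path_ends heads_distinct by auto
    finally show ?thesis .
  qed
  with sum two show ?thesis
    unfolding balanced_weighting_iff balances_def edges_split
    by (simp add: weight_def alt_cycle_weight_nonzero alt_path_weight_nonzero)
qed

lemma balances_alternates:
  fixes f :: "'a multiset \<Rightarrow> 'k::field"
  assumes f: "\<And>x. boundary (cycle_edges u \<union> cycle_edges v \<union> path_edges ps) f x = 0"
  shows "e \<in> cycle_edges u \<Longrightarrow> f e = alt_cycle_weight u (f (cycle_edge u 0)) e"
    and "e \<in> cycle_edges v \<Longrightarrow> f e = alt_cycle_weight v (f (cycle_edge v 0)) e"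
    and "e \<in> path_edges ps \<Longrightarrow> f e = alt_path_weight ps (f (path_edge ps 0)) e"
proof -
  let ?C = "cycle_edges u \<union> cycle_edges v \<union> path_edges ps"
  have vP: "verts (path_edges ps) = set ps" using path(2) by (rule verts_path_edges)
  show "f e = alt_cycle_weight u (f (cycle_edge u 0)) e" if "e \<in> cycle_edges u"
    by (rule alternating_on_cycle_in_Un[where D = "cycle_edges v \<union> path_edges ps", OF u(1) _ _ _ that])
      (use f path_meets_u cycles_disjoint in \<open>auto simp: Un_assoc verts_cycle_edges vP\<close>)
  show "f e = alt_cycle_weight v (f (cycle_edge v 0)) e" if "e \<in> cycle_edges v"
    by (rule alternating_on_cycle_in_Un[where D = "cycle_edges u \<union> path_edges ps", OF v(1) _ _ _ that])
      (use f path_meets_v cycles_disjoint in \<open>auto simp: Un_ac verts_cycle_edges vP\<close>)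
  show "f e = alt_path_weight ps (f (path_edge ps 0)) e" if "e \<in> path_edges ps"
  proof (rule alternating_on_path[OF path(1) _ _ f _ that])
    fix t assume "0 < t" "t < length ps - 1"
    then have "ps ! t \<notin> verts (cycle_edges u \<union> cycle_edges v)"
      using path_internal by (simp add: verts_cycle_edges)
    then show "ps ! t \<notin> verts (?C - path_edges ps)"
      using verts_mono[of "?C - path_edges ps" "cycle_edges u \<union> cycle_edges v"] by blast
  qed auto
qed


lemma balances_eq_mult_weight:
  fixes f :: "'a multiset \<Rightarrow> 'k::field"
  assumes two: "(2::'k) \<noteq> 0"
    and f: "balances (cycle_edges u \<union> cycle_edges v \<union> path_edges ps) f"
  shows "\<exists>c. \<forall>e \<in> cycle_edges u \<union> cycle_edges v \<union> path_edges ps. f e = c * weight e"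
proof -
  let ?C = "cycle_edges u \<union> cycle_edges v \<union> path_edges ps"
  let ?a = "f (cycle_edge u 0)" and ?b = "f (cycle_edge v 0)" and ?c = "f (path_edge ps 0)"
  have bf: "boundary ?C f x = 0" for x using f by (simp add: balances_def)
  note fU = balances_alternates(1)[OF bf] and fV = balances_alternates(2)[OF bf]
    and fP = balances_alternates(3)[OF bf]
  have bd: "boundary ?C f x = (if x = hd u then 2 * ?a else 0) + (if x = hd v then 2 * ?b else 0)
      + (if x = hd ps then ?c else if x = last ps then ?c * (-1) ^ length ps else 0)" for x
    unfolding edges_split using u v path
    by (simp add: fU fV fP boundary_alt_cycle_weight boundary_alt_path_weight cong: boundary_cong)
  have c: "?c = ?a * -2"
    using bd[of "hd u"] bf[of "hd u"] path_ends heads_distinct by (simp add: eq_neg_iff_add_eq_0 ac_simps)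
  have "2 * ?b = 2 * (?a * (-1) ^ length ps)"
    using bd[of "hd v"] bf[of "hd v"] path_ends heads_distinct c by (simp add: eq_neg_iff_add_eq_0)
  then have b: "?b = ?a * (-1) ^ length ps" using two by simp
  have "f e = ?a * weight e" if e: "e \<in> ?C" for e
  proof -
    consider "e \<in> cycle_edges u" | "e \<in> cycle_edges v" | "e \<in> path_edges ps" using e by blast
    then show ?thesis
    proof cases
      case 1
      then show ?thesis using fU alt_cycle_weight_mult[of u ?a 1 e] by (simp add: weight_on)
    next
      case 2
      then show ?thesis using fV b alt_cycle_weight_mult[of v ?a "(-1) ^ length ps" e] by (simp add: weight_on)
    next
      case 3
      then show ?thesis using fP c alt_path_weight_mult[of ps ?a "-2" e] by (simp add: weight_on)
    qed
  qed
  then show ?thesis by blast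
qed

theorem minimal_complex_edges:
  "(2::'k::field) \<noteq> 0 \<Longrightarrow> minimal_complex TYPE('k) (cycle_edges u \<union> cycle_edges v \<union> path_edges ps)"
  by (rule minimal_complexI[OF _ _ balanced_weighting_weight balances_eq_mult_weight])
    (simp_all add: cycle_edges_nonempty[OF u(1)])

end

lemma minimal_complex_if_even_cycle:
  "is_even_cycle C \<Longrightarrow> minimal_complex TYPE('k::field) C"
  unfolding is_even_cycle_def is_cycle_iff using minimal_even_cycle by blast

lemma minimal_complex_if_two_odd_cycles_one_vertex:
  assumes "two_odd_cycles_one_vertex C"
  shows "minimal_complex TYPE('k::field) C"
proof -
  obtain C1 C2 x where C: "is_odd_cycle C1" "is_odd_cycle C2" "C1 \<inter> C2 = {}"
    "verts C1 \<inter> verts C2 = {x}" "C = C1 \<union> C2"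
    using assms unfolding two_odd_cycles_one_vertex_def by (metis card_1_singletonE)
  obtain u where u: "simple_cycle u" "odd (length u)" "C1 = cycle_edges u" "hd u = x"
    using odd_cycle_through[OF C(1)] C(4) by blast
  obtain v where v: "simple_cycle v" "odd (length v)" "C2 = cycle_edges v" "hd v = x"
    using odd_cycle_through[OF C(2)] C(4) by blast
  show ?thesis
    unfolding C(5) u(3) v(3)
    by (rule minimal_odd_cycle_pair) (use u v C in \<open>auto simp: verts_cycle_edges\<close>)
qed

lemma minimal_complex_if_two_disjoint_odd_cycles:
  assumes "CHAR('k::field) = 2" "two_disjoint_odd_cycles C"
  shows "minimal_complex TYPE('k) C"
proof -
  obtain u v where u: "simple_cycle u" "odd (length u)" and v: "simple_cycle v" "odd (length v)"
    and disjoint: "set u \<inter> set v = {}" and C: "C = cycle_edges u \<union> cycle_edges v"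
    using assms(2) unfolding two_disjoint_odd_cycles_def is_odd_cycle_def is_cycle_iff
    by (auto simp: verts_cycle_edges)
  show ?thesis
    unfolding C
    by (rule minimal_odd_cycle_pair)
      (use u v disjoint assms(1) in \<open>simp_all add: cycle_edges_disjoint two_eq_zero_iff_CHAR\<close>)
qed

lemma minimal_complex_if_odd_cycles_with_path:
  assumes "CHAR('k::field) \<noteq> 2" "odd_cycles_with_path C"
  shows "minimal_complex TYPE('k) C"
proof -
  obtain C1 C2 ps where C: "is_odd_cycle C1" "is_odd_cycle C2" "verts C1 \<inter> verts C2 = {}"
    "distinct ps" "2 \<le> length ps" "hd ps \<in> verts C1" "last ps \<in> verts C2"
    and internal: "\<And>i. 0 < i \<Longrightarrow> i + 1 < length ps \<Longrightarrow> ps ! i \<notin> verts C1 \<union> verts C2"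
    and C_eq: "C = C1 \<union> C2 \<union> path_edges ps"
    using assms(2) unfolding odd_cycles_with_path_def by blast
  obtain u where u_cycle: "simple_cycle u" "odd (length u)" "C1 = cycle_edges u" "hd u = hd ps"
    using odd_cycle_through[OF C(1,6)] by blast
  obtain v where v_cycle: "simple_cycle v" "odd (length v)" "C2 = cycle_edges v" "hd v = last ps"
    using odd_cycle_through[OF C(2,7)] by blast
  have "ps \<noteq> []" using C(5) by auto
  then have ps: "ps \<noteq> []" "hd ps = ps ! 0" "last ps = ps ! (length ps - 1)"
    by (simp_all add: hd_conv_nth last_conv_nth)
  have meets: "set ps \<inter> set w \<subseteq> {hd ps, last ps}" if "set w \<subseteq> verts C1 \<union> verts C2" for w
  proof
    fix y assume y: "y \<in> set ps \<inter> set w"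
    then obtain i where i: "i < length ps" "y = ps ! i" by (auto simp: in_set_conv_nth)
    show "y \<in> {hd ps, last ps}"
    proof (cases "0 < i \<and> i + 1 < length ps")
      case True
      then show ?thesis using internal y that i(2) by blast
    next
      case False
      then have "i = 0 \<or> i = length ps - 1" using i(1) by linarith
      then show ?thesis using ps i(2) by auto
    qed
  qed
  interpret dumbbell u v ps
  proof
    show "set ps \<inter> set u = {hd u}" "set ps \<inter> set v = {hd v}"
      using meets[of u] meets[of v] C(3,6,7) u_cycle v_cycle ps(1) by (auto simp: verts_cycle_edges)
  qed (use u_cycle v_cycle C in \<open>auto simp: verts_cycle_edges\<close>)
  show ?thesis
    using minimal_complex_edges assms(1) unfolding C_eq u_cycle(3) v_cycle(3) two_eq_zero_iff_CHAR by blast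
qed

section \<open>Longest paths\<close>

definition is_path_in :: "'a multiset set \<Rightarrow> 'a list \<Rightarrow> bool" where
  "is_path_in H ps \<longleftrightarrow> distinct ps \<and> successively (\<lambda>a b. {#a, b#} \<in> H) ps"

lemma is_path_in_nth: "is_path_in H ps \<Longrightarrow> Suc i < length ps \<Longrightarrow> {#ps ! i, ps ! Suc i#} \<in> H"
  unfolding is_path_in_def using successively_nth by fastforce

lemma is_path_in_rev: "is_path_in H ps \<Longrightarrow> is_path_in H (rev ps)"
  unfolding is_path_in_def by (simp add: add_mset_commute)

lemma is_path_in_take: "is_path_in H ps \<Longrightarrow> is_path_in H (take n ps)"
  unfolding is_path_in_def using successively_append_iff[of _ "take n ps" "drop n ps"] by simp

lemma is_path_in_drop: "is_path_in H ps \<Longrightarrow> is_path_in H (drop n ps)"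
  unfolding is_path_in_def using successively_append_iff[of _ "take n ps" "drop n ps"] by simp

lemma is_path_in_append:
  "is_path_in H xs \<Longrightarrow> is_path_in H ys \<Longrightarrow> set xs \<inter> set ys = {} \<Longrightarrow> xs \<noteq> [] \<Longrightarrow> ys \<noteq> [] \<Longrightarrow>
    {#last xs, hd ys#} \<in> H \<Longrightarrow> is_path_in H (xs @ ys)"
  unfolding is_path_in_def by (simp add: successively_append_iff)

lemma is_path_in_Cons:
  "is_path_in H ps \<Longrightarrow> ps \<noteq> [] \<Longrightarrow> x \<notin> set ps \<Longrightarrow> {#x, hd ps#} \<in> H \<Longrightarrow> is_path_in H (x # ps)"
  unfolding is_path_in_def by (cases ps) simp_all

lemma path_edges_subset: "is_path_in H ps \<Longrightarrow> path_edges ps \<subseteq> H"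
  unfolding path_edges_def using is_path_in_nth by fastforce

lemma is_path_in_set_subset_verts: "is_path_in H ps \<Longrightarrow> 2 \<le> length ps \<Longrightarrow> set ps \<subseteq> verts H"
  using verts_mono[OF path_edges_subset] verts_path_edges by blast

lemma closed_path_cycle:
  assumes p: "is_path_in H vs" and "vs \<noteq> []" "length vs \<noteq> 2" and closing: "{#last vs, hd vs#} \<in> H"
  shows "simple_cycle vs" "cycle_edges vs \<subseteq> H"
proof -
  show "simple_cycle vs" using assms unfolding simple_cycle_def is_path_in_def by blast
  show "cycle_edges vs \<subseteq> H"
  proof
    fix e assume "e \<in> cycle_edges vs"
    then obtain i where i: "i < length vs" "e = {#vs ! i, vs ! ((i + 1) mod length vs)#}"
      unfolding cycle_edges_def by auto
    show "e \<in> H"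
    proof (cases "Suc i < length vs")
      case True
      then show ?thesis using i is_path_in_nth[OF p True] by simp
    next
      case False
      then have "i = length vs - 1" using i(1) by linarith
      then have "e = {#last vs, hd vs#}" using i \<open>vs \<noteq> []\<close> by (simp add: last_conv_nth hd_conv_nth)
      then show ?thesis using closing by simp
    qed
  qed
qed

definition longest_path :: "'a multiset set \<Rightarrow> 'a list \<Rightarrow> bool" where
  "longest_path H ps \<longleftrightarrow> is_path_in H ps \<and> 2 \<le> length ps \<and>
     (\<forall>qs. is_path_in H qs \<longrightarrow> length qs \<le> length ps)"

lemma longest_path_exists:
  assumes "finite H" "{#a, b#} \<in> H" "a \<noteq> b"
  obtains ps where "longest_path H ps"
proof -
  define P where "P n \<longleftrightarrow> (\<exists>qs. is_path_in H qs \<and> 2 \<le> length qs \<and> length qs = n)" for n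
  have "is_path_in H [a, b]" using assms(2,3) by (simp add: is_path_in_def)
  then have P2: "P 2" unfolding P_def by force
  have "n \<le> card (verts H)" if "P n" for n
  proof -
    obtain qs where qs: "is_path_in H qs" "2 \<le> length qs" "length qs = n"
      using \<open>P n\<close> unfolding P_def by blast
    have "n = card (set qs)" using qs unfolding is_path_in_def by (simp add: distinct_card)
    also have "\<dots> \<le> card (verts H)"
      using qs assms(1) by (intro card_mono is_path_in_set_subset_verts) (simp_all add: verts_def)
    finally show ?thesis .
  qed
  then obtain n where "P n" "\<And>m. P m \<Longrightarrow> m \<le> n"
    using ex_has_greatest_nat[of P 2 "\<lambda>n. n" "Suc (card (verts H))"] P2 by force
  then show thesis
    using that unfolding longest_path_def P_def by (metis nat_le_linear order_trans)
qed

lemma longest_path_rev: "longest_path H ps \<Longrightarrow> longest_path H (rev ps)"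
  unfolding longest_path_def by (simp add: is_path_in_rev)

definition has_even_cycle :: "'a multiset set \<Rightarrow> bool" where
  "has_even_cycle H \<longleftrightarrow> (\<exists>vs. simple_cycle vs \<and> even (length vs) \<and> cycle_edges vs \<subseteq> H)"

definition has_bowtie :: "'a multiset set \<Rightarrow> bool" where
  "has_bowtie H \<longleftrightarrow> (\<exists>u v. simple_cycle u \<and> odd (length u) \<and> simple_cycle v \<and> odd (length v) \<and>
     cycle_edges u \<inter> cycle_edges v = {} \<and> hd v = hd u \<and> set u \<inter> set v = {hd u} \<and>
     cycle_edges u \<union> cycle_edges v \<subseteq> H)"

definition has_dumbbell :: "'a multiset set \<Rightarrow> bool" where
  "has_dumbbell H \<longleftrightarrow> (\<exists>u v ps. dumbbell u v ps \<and>
     cycle_edges u \<union> cycle_edges v \<union> path_edges ps \<subseteq> H)"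

definition has_isolated_odd_cycle :: "'a multiset set \<Rightarrow> bool" where
  "has_isolated_odd_cycle H \<longleftrightarrow> (\<exists>vs. simple_cycle vs \<and> odd (length vs) \<and> cycle_edges vs \<subseteq> H \<and>
     (\<forall>e\<in>H. \<forall>x\<in>set vs. x \<in># e \<longrightarrow> e \<in> cycle_edges vs))"

text \<open>A head chord is an edge from \<open>ps ! 0\<close> back into the path other than the first path edge;
  it closes the cycle \<open>ps ! 0, \<dots>, ps ! j\<close>, a loop if \<open>j = 0\<close>.\<close>
definition head_chord :: "'a multiset set \<Rightarrow> 'a list \<Rightarrow> nat \<Rightarrow> bool" where
  "head_chord H ps j \<longleftrightarrow> (j = 0 \<or> 2 \<le> j \<and> j < length ps) \<and> {#ps ! 0, ps ! j#} \<in> H"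

definition tail_chord :: "'a multiset set \<Rightarrow> 'a list \<Rightarrow> nat \<Rightarrow> bool" where
  "tail_chord H ps i \<longleftrightarrow> (i = length ps - 1 \<or> i + 3 \<le> length ps) \<and> {#ps ! i, last ps#} \<in> H"

lemma head_chord_cycle:
  assumes p: "is_path_in H ps" "ps \<noteq> []" and j: "head_chord H ps j"
  defines "A \<equiv> rev (take (Suc j) ps)"
  shows "simple_cycle A" "cycle_edges A \<subseteq> H" "hd A = ps ! j" "length A = Suc j"
proof -
  have jL: "j < length ps" using j p(2) unfolding head_chord_def by auto
  then have take: "take (Suc j) ps = take j ps @ [ps ! j]" by (simp add: take_Suc_conv_app_nth)
  show "hd A = ps ! j" "length A = Suc j"
    using jL unfolding A_def take by simp_all
  have "is_path_in H A" unfolding A_def by (intro is_path_in_rev is_path_in_take p(1))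
  moreover have "A \<noteq> []" "length A \<noteq> 2" "{#last A, hd A#} \<in> H"
    using p j jL unfolding A_def head_chord_def take
    by (auto simp: last_rev hd_append hd_conv_nth)
  ultimately show "simple_cycle A" "cycle_edges A \<subseteq> H" by (simp_all add: closed_path_cycle)
qed

lemma tail_chord_cycle:
  assumes p: "is_path_in H ps" "ps \<noteq> []" and i: "tail_chord H ps i"
  defines "B \<equiv> drop i ps"
  shows "simple_cycle B" "cycle_edges B \<subseteq> H" "hd B = ps ! i" "length B = length ps - i"
proof -
  have iL: "i < length ps" using i p(2) unfolding tail_chord_def by auto
  show "hd B = ps ! i" "length B = length ps - i"
    using iL unfolding B_def by (simp_all add: hd_drop_conv_nth)
  have "is_path_in H B" "B \<noteq> []" "length B \<noteq> 2" "{#last B, hd B#} \<in> H"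
    using p i iL unfolding B_def tail_chord_def
    by (auto simp: is_path_in_drop hd_drop_conv_nth add_mset_commute)
  then show "simple_cycle B" "cycle_edges B \<subseteq> H" by (simp_all add: closed_path_cycle)
qed

lemma crossing_chords_even_cycle:
  assumes p: "is_path_in H ps" "2 \<le> length ps"
    and j: "head_chord H ps j" and i: "tail_chord H ps i"
    and ij: "i < j" "\<not> (i = 0 \<and> j = length ps - 1)"
    and parity: "even j" "odd (length ps - i)"
  shows "has_even_cycle H"
proof -
  let ?L = "length ps"
  have jL: "j < ?L" using j ij unfolding head_chord_def by auto
  have ne: "ps \<noteq> []" using p(2) by auto
  define X where "X = take (Suc i) ps"
  define Y where "Y = rev (drop j ps)"
  have X: "is_path_in H X" "X \<noteq> []" "hd X = ps ! 0" "last X = ps ! i" "length X = Suc i"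
    using p(1) ne ij jL unfolding X_def
    by (simp_all add: is_path_in_take hd_conv_nth last_take_Suc)
  have Y: "is_path_in H Y" "Y \<noteq> []" "hd Y = last ps" "last Y = ps ! j" "length Y = ?L - j"
    using p jL unfolding Y_def
    by (simp_all add: is_path_in_rev is_path_in_drop hd_rev last_rev hd_drop_conv_nth)
  have "set X \<inter> set Y = {}"
    using set_take_disj_set_drop_if_distinct[of ps "Suc i" j] p(1) ij
    unfolding X_def Y_def is_path_in_def by simp
  then have "is_path_in H (X @ Y)"
    using X Y i unfolding tail_chord_def by (intro is_path_in_append) simp_all
  moreover have "length (X @ Y) \<noteq> 2" using X Y ij jL by auto
  moreover have "{#last (X @ Y), hd (X @ Y)#} \<in> H"
    using X Y j unfolding head_chord_def by (simp add: add_mset_commute)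
  moreover have "even (length (X @ Y))" using X Y parity ij jL by simp
  ultimately show ?thesis
    unfolding has_even_cycle_def using X(2) closed_path_cycle by blast
qed

lemma meeting_chords_bowtie:
  assumes p: "is_path_in H ps" "2 \<le> length ps"
    and j: "head_chord H ps j" and i: "tail_chord H ps j"
    and parity: "even j" "odd (length ps - j)"
  shows "has_bowtie H"
proof -
  let ?L = "length ps" and ?A = "rev (take (Suc j) ps)" and ?B = "drop j ps"
  have ne: "ps \<noteq> []" and jL: "j < ?L" using p j unfolding head_chord_def by auto
  note A = head_chord_cycle[OF p(1) ne j] and B = tail_chord_cycle[OF p(1) ne i]
  have d: "distinct ps" using p(1) unfolding is_path_in_def by blast
  have "set ?A \<inter> set ?B = (!) ps ` ({0..<Suc j} \<inter> {j..<?L})"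
  proof -
    have "{0..<Suc j} \<subseteq> {..<?L}" "{j..<?L} \<subseteq> {..<?L}" using jL by auto
    then show ?thesis
      using set_drop_take[of "Suc j" ps 0] set_drop_take[of ?L ps j] jL
        nth_image_Int[OF d, of "{0..<Suc j}" "{j..<?L}"] by simp
  qed
  also have "{0..<Suc j} \<inter> {j..<?L} = {j}" using jL by auto
  finally have meet: "set ?A \<inter> set ?B = {ps ! j}" by simp
  have disjoint: "cycle_edges ?A \<inter> cycle_edges ?B = {}"
  proof (rule equals0I)
    fix e assume e: "e \<in> cycle_edges ?A \<inter> cycle_edges ?B"
    then have "set_mset e \<subseteq> set ?A \<inter> set ?B"
      using set_mset_subset_verts[of e "cycle_edges ?A"] set_mset_subset_verts[of e "cycle_edges ?B"]
      by (simp add: verts_cycle_edges)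
    moreover obtain a b where ab: "e = {#a, b#}" using e unfolding cycle_edges_def by blast
    ultimately have "a \<in> set ?A \<inter> set ?B" "b \<in> set ?A \<inter> set ?B" by auto
    then have "e = {#ps ! j, ps ! j#}" unfolding meet ab by simp
    then have "length ?A = 1" "length ?B = 1"
      using e loop_in_cycle_edges[OF A(1), of "ps ! j"] loop_in_cycle_edges[OF B(1), of "ps ! j"]
      by blast+
    then show False using p(2) by simp
  qed
  have "simple_cycle ?A \<and> odd (length ?A) \<and> simple_cycle ?B \<and> odd (length ?B) \<and>
      cycle_edges ?A \<inter> cycle_edges ?B = {} \<and> hd ?B = hd ?A \<and> set ?A \<inter> set ?B = {hd ?A} \<and>
      cycle_edges ?A \<union> cycle_edges ?B \<subseteq> H"
    using A B meet parity disjoint by simp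
  then show ?thesis unfolding has_bowtie_def by blast
qed

lemma disjoint_chords_dumbbell:
  assumes p: "is_path_in H ps" "2 \<le> length ps"
    and j: "head_chord H ps j" and i: "tail_chord H ps i"
    and ji: "j < i" and parity: "even j" "odd (length ps - i)"
  shows "has_dumbbell H"
proof -
  let ?L = "length ps" and ?A = "rev (take (Suc j) ps)" and ?B = "drop i ps"
    and ?q = "drop j (take (Suc i) ps)"
  have ne: "ps \<noteq> []" and d: "distinct ps" and iL: "i < ?L"
    using p i unfolding tail_chord_def is_path_in_def by auto
  note A = head_chord_cycle[OF p(1) ne j] and B = tail_chord_cycle[OF p(1) ne i]
  have sets: "set (take (Suc j) ps) = (!) ps ` {0..<Suc j}" "set ?B = (!) ps ` {i..<?L}"
    "set ?q = (!) ps ` {j..<Suc i}"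
    using set_drop_take[of "Suc j" ps 0] set_drop_take[of ?L ps i] set_drop_take[of "Suc i" ps j] ji iL
    by simp_all
  have img: "(!) ps ` I \<inter> (!) ps ` J = (!) ps ` (I \<inter> J)" if "I \<subseteq> {..<?L}" "J \<subseteq> {..<?L}" for I J
    using nth_image_Int[OF d that] .
  have "length ?q = Suc i - j" using iL by simp
  then have q: "is_path_in H ?q" "2 \<le> length ?q" "hd ?q = ps ! j" "last ?q = ps ! i"
    using p(1) ji iL by (simp_all add: is_path_in_drop is_path_in_take hd_drop_conv_nth last_take_Suc)
  have "dumbbell ?A ?B ?q"
  proof
    show "set ?A \<inter> set ?B = {}"
      unfolding set_rev sets using ji iL by (subst img) auto
    show "set ?q \<inter> set ?A = {hd ?A}"
      unfolding set_rev sets A(3) using ji iL by (subst img) auto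
    show "set ?q \<inter> set ?B = {hd ?B}"
      unfolding sets B(3) using ji iL by (subst img) auto
    show "simple_cycle ?A" by (rule A(1))
    show "simple_cycle ?B" by (rule B(1))
    show "odd (length ?A)" "odd (length ?B)" using A(4) B(4) parity by simp_all
    show "distinct ?q" using d by simp
    show "2 \<le> length ?q" "hd ?q = hd ?A" "last ?q = hd ?B" using q A(3) B(3) by simp_all
  qed
  moreover have "cycle_edges ?A \<union> cycle_edges ?B \<union> path_edges ?q \<subseteq> H"
    using A(2) B(2) path_edges_subset[OF q(1)] by simp
  ultimately show ?thesis
    unfolding has_dumbbell_def by blast
qed

text \<open>The excluded pair is a single edge joining the two ends, seen from either end.\<close>
definition has_chord_pair :: "'a multiset set \<Rightarrow> 'a list \<Rightarrow> bool" where
  "has_chord_pair H ps \<longleftrightarrow>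
     (\<exists>i j. head_chord H ps j \<and> tail_chord H ps i \<and> \<not> (i = 0 \<and> j = length ps - 1))"

lemma chord_pair_configuration:
  assumes p: "is_path_in H ps" "2 \<le> length ps" and chords: "has_chord_pair H ps"
  shows "has_even_cycle H \<or> has_bowtie H \<or> has_dumbbell H"
proof -
  obtain i j where j: "head_chord H ps j" and i: "tail_chord H ps i"
    and not_closing: "\<not> (i = 0 \<and> j = length ps - 1)"
    using chords unfolding has_chord_pair_def by blast
  have ne: "ps \<noteq> []" using p(2) by auto
  note A = head_chord_cycle[OF p(1) ne j] and B = tail_chord_cycle[OF p(1) ne i]
  consider "odd j" | "even (length ps - i)" | "even j" "odd (length ps - i)" by blast
  then show ?thesis
  proof cases
    case 1
    then show ?thesis using A unfolding has_even_cycle_def by auto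
  next
    case 2
    then show ?thesis using B unfolding has_even_cycle_def by auto
  next
    case 3
    consider "i < j" | "i = j" | "j < i" by linarith
    then show ?thesis
    proof cases
      case 1
      then show ?thesis using crossing_chords_even_cycle p i j not_closing 3 by blast
    next
      case 2
      then show ?thesis using meeting_chords_bowtie p i j 3 by blast
    next
      case 3
      then show ?thesis using disjoint_chords_dumbbell p i j \<open>even j\<close> \<open>odd (length ps - i)\<close> by blast
    qed
  qed
qed

definition no_pendant_edge :: "'a multiset set \<Rightarrow> bool" where
  "no_pendant_edge H \<longleftrightarrow> (\<forall>a b. {#a, b#} \<in> H \<and> a \<noteq> b \<longrightarrow> (\<exists>e\<in>H. e \<noteq> {#a, b#} \<and> a \<in># e))"

lemma one_complex_edge:
  assumes "one_complex H" "e \<in> H" "x \<in># e"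
  obtains y where "e = {#x, y#}"
proof -
  obtain A where A: "e = add_mset x A" using multi_member_split[OF assms(3)] by blast
  then have "size A = 1" using assms(1,2) unfolding one_complex_def by auto
  then obtain y where "A = {#y#}" using size_1_singleton_mset by blast
  then show thesis using that A by blast
qed

lemma longest_path_head_edge:
  assumes lp: "longest_path H ps" and H: "one_complex H"
    and e: "e \<in> H" "ps ! 0 \<in># e" "e \<noteq> {#ps ! 0, ps ! 1#}"
  obtains j where "head_chord H ps j" "e = {#ps ! 0, ps ! j#}"
proof -
  have p: "is_path_in H ps" and ne: "ps \<noteq> []" using lp unfolding longest_path_def by auto
  obtain y where y: "e = {#ps ! 0, y#}" using one_complex_edge[OF H e(1,2)] .
  have "y \<in> set ps"
  proof (rule ccontr)
    assume "y \<notin> set ps"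
    moreover have "{#y, hd ps#} \<in> H" using e(1) y ne by (simp add: hd_conv_nth add_mset_commute)
    ultimately have "is_path_in H (y # ps)" using p ne by (rule is_path_in_Cons[rotated 2])
    then show False using lp unfolding longest_path_def by fastforce
  qed
  then obtain j where j: "j < length ps" "y = ps ! j" by (auto simp: in_set_conv_nth)
  with e(3) y have "j \<noteq> 1" by auto
  with j have "head_chord H ps j" using e(1) y unfolding head_chord_def by auto
  with y j show thesis using that by blast
qed

lemma longest_path_head_chord:
  assumes lp: "longest_path H ps" and H: "one_complex H" "no_pendant_edge H"
  obtains j where "head_chord H ps j"
proof -
  have p: "is_path_in H ps" and L: "2 \<le> length ps" using lp unfolding longest_path_def by auto
  have edge: "{#ps ! 0, ps ! 1#} \<in> H" using is_path_in_nth[OF p, of 0] L by simp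
  have "1 < length ps" "ps \<noteq> []" using L by auto
  then have "ps ! 0 \<noteq> ps ! 1"
    using p nth_eq_iff_index_eq[of ps 0 1] unfolding is_path_in_def by simp
  then obtain e where "e \<in> H" "e \<noteq> {#ps ! 0, ps ! 1#}" "ps ! 0 \<in># e"
    using H(2) edge unfolding no_pendant_edge_def by blast
  then show thesis using longest_path_head_edge[OF lp H(1)] that by blast
qed

lemma tail_chord_if_head_chord_rev:
  assumes "head_chord H (rev ps) j" "ps \<noteq> []"
  shows "tail_chord H ps (length ps - 1 - j)"
  using assms unfolding head_chord_def tail_chord_def
  by (auto simp: rev_nth last_conv_nth add_mset_commute)

lemma longest_path_tail_chord:
  assumes lp: "longest_path H ps" and H: "one_complex H" "no_pendant_edge H"
  obtains i where "tail_chord H ps i"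
proof -
  have "ps \<noteq> []" using lp unfolding longest_path_def by auto
  obtain j where "head_chord H (rev ps) j"
    using longest_path_head_chord[OF longest_path_rev[OF lp] H] .
  then show thesis using that tail_chord_if_head_chord_rev \<open>ps \<noteq> []\<close> by blast
qed

text \<open>Without a chord pair both ends can only reach each other, so the path closes to a cycle
  containing every edge at its head.\<close>
lemma longest_path_closes:
  assumes lp: "longest_path H ps" and H: "one_complex H" "no_pendant_edge H"
    and no_chords: "\<not> has_chord_pair H ps"
  shows "simple_cycle ps" "cycle_edges ps \<subseteq> H"
    and "\<And>e. e \<in> H \<Longrightarrow> hd ps \<in># e \<Longrightarrow> e \<in> cycle_edges ps"
proof -
  let ?L = "length ps"
  have p: "is_path_in H ps" and L: "2 \<le> ?L" and ne: "ps \<noteq> []"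
    using lp unfolding longest_path_def by auto
  obtain i where i: "tail_chord H ps i" using longest_path_tail_chord[OF lp H] .
  have forced: "i = 0 \<and> j = ?L - 1" if "head_chord H ps j" for j
    using no_chords that i unfolding has_chord_pair_def by blast
  obtain j where "head_chord H ps j" using longest_path_head_chord[OF lp H] .
  then have closing: "{#ps ! 0, ps ! (?L - 1)#} \<in> H" and "i = 0"
    using forced unfolding head_chord_def by auto
  then have L3: "3 \<le> ?L" using i L unfolding tail_chord_def by auto
  have "{#last ps, hd ps#} \<in> H"
    using closing ne by (simp add: last_conv_nth hd_conv_nth add_mset_commute)
  then show cycle: "simple_cycle ps" "cycle_edges ps \<subseteq> H"
    using closed_path_cycle[OF p ne] L3 by simp_all
  fix e assume e: "e \<in> H" "hd ps \<in># e"
  show "e \<in> cycle_edges ps"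
  proof (cases "e = {#ps ! 0, ps ! 1#}")
    case True
    then show ?thesis using cycle_edge_in_cycle_edges[of 0 ps] L3 ne by (simp add: cycle_edge_def)
  next
    case False
    then obtain j where "head_chord H ps j" "e = {#ps ! 0, ps ! j#}"
      using longest_path_head_edge[OF lp H(1) e(1)] e(2) ne by (auto simp: hd_conv_nth)
    moreover have "?L - 1 + 1 = ?L" using L3 by simp
    then have "(?L - 1 + 1) mod ?L = 0" by simp
    ultimately have "e = cycle_edge ps (?L - 1)"
      using forced unfolding cycle_edge_def by (simp add: add_mset_commute)
    then show ?thesis using cycle_edge_in_cycle_edges[of "?L - 1" ps] L3 by simp
  qed
qed

lemma longest_path_rotate:
  assumes lp: "longest_path H ps" and cycle: "cycle_edges ps \<subseteq> H"
  shows "longest_path H (rotate t ps)"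
proof -
  let ?q = "rotate t ps" and ?L = "length ps"
  have "{#?q ! i, ?q ! Suc i#} \<in> H" if i: "Suc i < length ?q" for i
  proof -
    have "{#?q ! i, ?q ! Suc i#} = cycle_edge ?q i" using i by (simp add: cycle_edge_def)
    also have "\<dots> = cycle_edge ps ((t + i) mod ?L)" using i by (simp add: cycle_edge_rotate)
    also have "\<dots> \<in> H"
    proof -
      have "ps \<noteq> []" using i by (cases ps) auto
      then show ?thesis using cycle cycle_edge_in_cycle_edges[of "(t + i) mod ?L" ps] by auto
    qed
    finally show ?thesis .
  qed
  then show ?thesis
    using lp unfolding longest_path_def is_path_in_def by (simp add: successively_conv_nth)
qed

lemma edges_at_cycle_without_chord_pairs:
  assumes lp: "longest_path H ps" and H: "one_complex H" "no_pendant_edge H"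
    and cycle: "cycle_edges ps \<subseteq> H" and no_chords: "\<And>t. \<not> has_chord_pair H (rotate t ps)"
    and e: "e \<in> H" "x \<in> set ps" "x \<in># e"
  shows "e \<in> cycle_edges ps"
proof -
  obtain t where t: "t < length ps" "ps ! t = x" using e(2) by (auto simp: in_set_conv_nth)
  then have "ps \<noteq> []" by auto
  with t have "hd (rotate t ps) = x" by (simp add: hd_rotate_conv_nth)
  then show ?thesis
    using longest_path_closes(3)[OF longest_path_rotate[OF lp cycle, of t] H no_chords[of t] e(1)] e(3)
    by simp
qed

lemma loop_if_no_links:
  assumes H: "one_complex H" and no_links: "\<And>x y. {#x, y#} \<in> H \<Longrightarrow> x = y"
    and e: "e \<in> H" "b \<in># e"
  shows "e = {#b, b#}"
proof -
  obtain y where "e = {#b, y#}" using one_complex_edge[OF H e] .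
  then show ?thesis using no_links[of b y] e(1) by simp
qed

lemma isolated_loop_if_no_links:
  assumes H: "one_complex H" "H \<noteq> {}" and no_links: "\<And>x y. {#x, y#} \<in> H \<Longrightarrow> x = y"
  shows "has_isolated_odd_cycle H"
proof -
  obtain e where e: "e \<in> H" using H(2) by blast
  then have "e \<noteq> {#}" using H(1) unfolding one_complex_def by auto
  then obtain b where "b \<in># e" by (rule multiset_nonemptyE)
  then have loop: "{#b, b#} \<in> H" using loop_if_no_links[OF H(1) no_links e] e by simp
  have "\<forall>e\<in>H. \<forall>x\<in>set [b]. x \<in># e \<longrightarrow> e \<in> cycle_edges [b]"
  proof (intro ballI impI)
    fix e x assume "e \<in> H" "x \<in> set [b]" "x \<in># e"
    then have "e = {#b, b#}" using loop_if_no_links[OF H(1) no_links] by simp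
    then show "e \<in> cycle_edges [b]" by simp
  qed
  moreover have "simple_cycle [b]" "odd (length [b])" "cycle_edges [b] \<subseteq> H" using loop by simp_all
  ultimately show ?thesis unfolding has_isolated_odd_cycle_def by blast
qed

theorem cycle_configuration:
  assumes H: "one_complex H" "H \<noteq> {}" "no_pendant_edge H"
  shows "has_even_cycle H \<or> has_bowtie H \<or> has_dumbbell H \<or> has_isolated_odd_cycle H"
proof (cases "\<exists>a b. {#a, b#} \<in> H \<and> a \<noteq> b")
  case False
  then show ?thesis using isolated_loop_if_no_links[OF H(1,2)] by blast
next
  case True
  then obtain a b where ab: "{#a, b#} \<in> H" "a \<noteq> b" by blast
  have "finite H" using H(1) unfolding one_complex_def by blast
  then obtain ps where lp: "longest_path H ps" using ab by (rule longest_path_exists)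
  then have p: "is_path_in H ps" "2 \<le> length ps" unfolding longest_path_def by auto
  show ?thesis
  proof (cases "has_chord_pair H ps")
    case True
    then show ?thesis using chord_pair_configuration[OF p] by blast
  next
    case False
    note closed = longest_path_closes[OF lp H(1,3) False]
    show ?thesis
    proof (cases "\<exists>t. has_chord_pair H (rotate t ps)")
      case True
      then obtain t where "has_chord_pair H (rotate t ps)" by blast
      moreover have "longest_path H (rotate t ps)" using longest_path_rotate[OF lp closed(2)] .
      ultimately have "has_even_cycle H \<or> has_bowtie H \<or> has_dumbbell H"
        using chord_pair_configuration[of H "rotate t ps"] unfolding longest_path_def by simp
      then show ?thesis by blast
    next
      case False
      then have "\<forall>e\<in>H. \<forall>x\<in>set ps. x \<in># e \<longrightarrow> e \<in> cycle_edges ps"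
        using edges_at_cycle_without_chord_pairs[OF lp H(1,3) closed(2)] by blast
      then have "even (length ps) \<and> has_even_cycle H \<or> odd (length ps) \<and> has_isolated_odd_cycle H"
        using closed(1,2) unfolding has_even_cycle_def has_isolated_odd_cycle_def by blast
      then show ?thesis by blast
    qed
  qed
qed

section \<open>Minimal complexes\<close>

lemma no_pendant_edge_if_balanced:
  assumes fin: "finite C" and w: "balanced_weighting C w"
  shows "no_pendant_edge C"
  unfolding no_pendant_edge_def
proof (intro allI impI)
  fix a b assume ab: "{#a, b#} \<in> C \<and> a \<noteq> b"
  show "\<exists>e\<in>C. e \<noteq> {#a, b#} \<and> a \<in># e"
  proof (rule ccontr)
    assume "\<not> ?thesis"
    then have "boundary C w a = boundary {{#a, b#}} w a"
      using fin ab by (intro boundary_local) auto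
    also have "\<dots> = w {#a, b#}" using ab by (auto simp: boundary_def)
    finally show False using w ab by (simp add: balanced_weighting_iff balances_def)
  qed
qed

definition has_odd_cycle :: "'a multiset set \<Rightarrow> bool" where
  "has_odd_cycle H \<longleftrightarrow> (\<exists>vs. simple_cycle vs \<and> odd (length vs) \<and> cycle_edges vs \<subseteq> H)"

lemma has_odd_cycleI:
  assumes "has_bowtie H \<or> has_dumbbell H \<or> has_isolated_odd_cycle H"
  shows "has_odd_cycle H"
  using assms
proof (elim disjE)
  assume "has_dumbbell H"
  then obtain u v ps where "dumbbell u v ps" "cycle_edges u \<subseteq> H"
    unfolding has_dumbbell_def by blast
  then show ?thesis unfolding has_odd_cycle_def using dumbbell.u by blast
qed (auto simp: has_odd_cycle_def has_bowtie_def has_isolated_odd_cycle_def)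

lemma minimal_has_even_cycle:
  assumes "minimal_complex TYPE('k::field) C" "has_even_cycle C"
  shows "is_even_cycle C"
proof -
  obtain vs where vs: "simple_cycle vs" "even (length vs)" "cycle_edges vs \<subseteq> C"
    using assms(2) unfolding has_even_cycle_def by blast
  then have "cycle_edges vs = C"
    using minimal_complex_subset_eq[OF assms(1) vs(3) minimal_even_cycle[OF vs(1,2)]] by blast
  then show ?thesis using is_even_cycle_cycle_edges[OF vs(1,2)] by simp
qed

lemma minimal_has_bowtie:
  assumes "minimal_complex TYPE('k::field) C" "has_bowtie C"
  shows "two_odd_cycles_one_vertex C"
proof -
  obtain u v where u: "simple_cycle u" "odd (length u)" and v: "simple_cycle v" "odd (length v)"
    and disjoint: "cycle_edges u \<inter> cycle_edges v = {}" and meet: "hd v = hd u" "set u \<inter> set v = {hd u}"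
    and sub: "cycle_edges u \<union> cycle_edges v \<subseteq> C"
    using assms(2) unfolding has_bowtie_def by blast
  have "minimal_complex TYPE('k) (cycle_edges u \<union> cycle_edges v)"
    using u v disjoint meet by (intro minimal_odd_cycle_pair) auto
  then have "cycle_edges u \<union> cycle_edges v = C"
    using minimal_complex_subset_eq[OF assms(1) sub] by blast
  then have "is_odd_cycle (cycle_edges u) \<and> is_odd_cycle (cycle_edges v) \<and>
      cycle_edges u \<inter> cycle_edges v = {} \<and>
      card (verts (cycle_edges u) \<inter> verts (cycle_edges v)) = 1 \<and> C = cycle_edges u \<union> cycle_edges v"
    using u v disjoint meet by (simp add: is_odd_cycle_cycle_edges verts_cycle_edges)
  then show ?thesis unfolding two_odd_cycles_one_vertex_def by blast
qed

lemma minimal_has_disjoint_odd_cycles: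
  assumes "minimal_complex TYPE('k::field) C" "CHAR('k) = 2"
    and u: "simple_cycle u" "odd (length u)" and v: "simple_cycle v" "odd (length v)"
    and disjoint: "set u \<inter> set v = {}" and sub: "cycle_edges u \<union> cycle_edges v \<subseteq> C"
  shows "two_disjoint_odd_cycles C"
proof -
  have "minimal_complex TYPE('k) (cycle_edges u \<union> cycle_edges v)"
    using u v disjoint assms(2)
    by (intro minimal_odd_cycle_pair) (simp_all add: cycle_edges_disjoint two_eq_zero_iff_CHAR)
  then have "cycle_edges u \<union> cycle_edges v = C"
    using minimal_complex_subset_eq[OF assms(1) sub] by blast
  then have "is_odd_cycle (cycle_edges u) \<and> is_odd_cycle (cycle_edges v) \<and>
      verts (cycle_edges u) \<inter> verts (cycle_edges v) = {} \<and> C = cycle_edges u \<union> cycle_edges v"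
    using u v disjoint by (simp add: is_odd_cycle_cycle_edges verts_cycle_edges)
  then show ?thesis unfolding two_disjoint_odd_cycles_def by blast
qed

lemma minimal_has_dumbbell:
  assumes min: "minimal_complex TYPE('k::field) C" and "has_dumbbell C"
  shows "CHAR('k) = 2 \<and> two_disjoint_odd_cycles C \<or> CHAR('k) \<noteq> 2 \<and> odd_cycles_with_path C"
proof -
  obtain u v ps where db: "dumbbell u v ps"
    and sub: "cycle_edges u \<union> cycle_edges v \<union> path_edges ps \<subseteq> C"
    using assms(2) unfolding has_dumbbell_def by blast
  interpret dumbbell u v ps by (fact db)
  show ?thesis
  proof (cases "CHAR('k) = 2")
    case True
    then show ?thesis
      using minimal_has_disjoint_odd_cycles[OF min True u v cycles_disjoint] sub by blast
  next
    case False
    then have "(2::'k) \<noteq> 0" by (simp add: two_eq_zero_iff_CHAR)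
    then have "cycle_edges u \<union> cycle_edges v \<union> path_edges ps = C"
      using minimal_complex_subset_eq[OF min sub] minimal_complex_edges by blast
    moreover have "hd ps \<in> set u" "last ps \<in> set v"
      using path_ends u(1) v(1) unfolding simple_cycle_def by simp_all
    moreover have "ps ! i \<notin> set u \<union> set v" if "0 < i" "i + 1 < length ps" for i
      using path_internal that by simp
    ultimately have "is_odd_cycle (cycle_edges u) \<and> is_odd_cycle (cycle_edges v) \<and>
        verts (cycle_edges u) \<inter> verts (cycle_edges v) = {} \<and> distinct ps \<and> length ps \<ge> 2 \<and>
        hd ps \<in> verts (cycle_edges u) \<and> last ps \<in> verts (cycle_edges v) \<and>
        (\<forall>i. 0 < i \<and> i + 1 < length ps \<longrightarrow>
          ps ! i \<notin> verts (cycle_edges u) \<union> verts (cycle_edges v)) \<and>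
        C = cycle_edges u \<union> cycle_edges v \<union> path_edges ps"
      using u v path cycles_disjoint by (simp add: is_odd_cycle_cycle_edges verts_cycle_edges)
    then have "odd_cycles_with_path C" unfolding odd_cycles_with_path_def by blast
    with False show ?thesis by blast
  qed
qed

text \<open>Balancing forces the weights to alternate around an isolated cycle; at the head of an odd
  cycle this leaves the boundary \<open>2 a\<close>, and the total weight \<open>a\<close> must be cancelled by other edges.\<close>
lemma balanced_isolated_odd_cycle:
  fixes w :: "'a multiset \<Rightarrow> 'k::field"
  assumes fin: "finite C" and w: "balanced_weighting C w"
    and vs: "simple_cycle vs" "odd (length vs)" "cycle_edges vs \<subseteq> C"
    and isolated: "\<forall>e\<in>C. \<forall>x\<in>set vs. x \<in># e \<longrightarrow> e \<in> cycle_edges vs"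
  shows "CHAR('k) = 2" "cycle_edges vs \<noteq> C"
proof -
  let ?O = "cycle_edges vs" and ?a = "w (cycle_edge vs 0)"
  have w0: "\<And>x. boundary C w x = 0" "sum w C = 0" and nz: "\<And>e. e \<in> C \<Longrightarrow> w e \<noteq> 0"
    using w by (simp_all add: balanced_weighting_iff balances_def)
  have "vs \<noteq> []" using vs(1) unfolding simple_cycle_def by blast
  then have a: "?a \<noteq> 0" using nz vs(3) cycle_edge_in_cycle_edges[of 0 vs] by auto
  have unshared: "vs ! t \<notin> verts (C - ?O)" if "t < length vs" for t
    using isolated nth_mem[OF that] unfolding verts_def by blast
  have wO: "w e = alt_cycle_weight vs ?a e" if "e \<in> ?O" for e
    using alternating_on_cycle[OF vs(1) fin vs(3) w0(1) unshared that] by blast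
  have "boundary C w (hd vs) = boundary ?O w (hd vs)"
    using isolated hd_in_set[OF \<open>vs \<noteq> []\<close>] by (intro boundary_local[OF fin vs(3)]) blast
  also have "\<dots> = 2 * ?a"
    using vs by (simp add: wO boundary_alt_cycle_weight cong: boundary_cong)
  finally have "(2::'k) = 0" using w0(1) a by simp
  then show "CHAR('k) = 2" by (simp add: two_eq_zero_iff_CHAR)
  have "sum w ?O = ?a" using vs by (simp add: wO sum_alt_cycle_weight cong: sum.cong)
  then show "?O \<noteq> C" using w0(2) a by auto
qed

lemma no_pendant_edge_Diff_isolated:
  assumes H: "no_pendant_edge C" and iso: "\<forall>e\<in>C. \<forall>x\<in>set vs. x \<in># e \<longrightarrow> e \<in> cycle_edges vs"
  shows "no_pendant_edge (C - cycle_edges vs)"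
  unfolding no_pendant_edge_def
proof (intro allI impI)
  fix a b assume ab: "{#a, b#} \<in> C - cycle_edges vs \<and> a \<noteq> b"
  then obtain e where e: "e \<in> C" "e \<noteq> {#a, b#}" "a \<in># e"
    using H unfolding no_pendant_edge_def by blast
  have "a \<in># {#a, b#}" by simp
  then have "a \<notin> set vs" using iso ab by blast
  then have "e \<notin> cycle_edges vs"
    using e(3) set_mset_subset_verts[of e "cycle_edges vs"] by (auto simp: verts_cycle_edges)
  then show "\<exists>e\<in>C - cycle_edges vs. e \<noteq> {#a, b#} \<and> a \<in># e" using e by blast
qed

lemma minimal_has_isolated_odd_cycle:
  assumes H: "one_complex C" and min: "minimal_complex TYPE('k::field) C"
    and "has_isolated_odd_cycle C"
  shows "CHAR('k) = 2 \<and> two_disjoint_odd_cycles C"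
proof -
  obtain vs where vs: "simple_cycle vs" "odd (length vs)" "cycle_edges vs \<subseteq> C"
    and isolated: "\<forall>e\<in>C. \<forall>x\<in>set vs. x \<in># e \<longrightarrow> e \<in> cycle_edges vs"
    using assms(3) unfolding has_isolated_odd_cycle_def by blast
  obtain w :: "'a multiset \<Rightarrow> 'k" where w: "balanced_weighting C w"
    using min unfolding minimal_complex_def balanceable_def by blast
  have fin: "finite C" using H unfolding one_complex_def by blast
  note char = balanced_isolated_odd_cycle[OF fin w vs isolated]
  let ?R = "C - cycle_edges vs"
  have R: "one_complex ?R" "?R \<noteq> {}" "no_pendant_edge ?R"
    using H char(2) vs(3) no_pendant_edge_Diff_isolated[OF no_pendant_edge_if_balanced[OF fin w] isolated]
    unfolding one_complex_def by auto
  have "\<not> has_even_cycle ?R"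
  proof
    assume "has_even_cycle ?R"
    then obtain u where u: "simple_cycle u" "even (length u)" "cycle_edges u \<subseteq> ?R"
      unfolding has_even_cycle_def by blast
    then have "cycle_edges u = C"
      using minimal_complex_subset_eq[OF min _ minimal_even_cycle[OF u(1,2)]] by blast
    then show False using u(3) vs(3) cycle_edges_nonempty[OF vs(1)] by blast
  qed
  then have "has_odd_cycle ?R" using cycle_configuration[OF R] has_odd_cycleI by blast
  then obtain u where u: "simple_cycle u" "odd (length u)" "cycle_edges u \<subseteq> ?R"
    unfolding has_odd_cycle_def by blast
  have disjoint: "set vs \<inter> set u = {}"
  proof (rule equals0I)
    fix x assume x: "x \<in> set vs \<inter> set u"
    then obtain e where "e \<in> cycle_edges u" "x \<in># e"
      using verts_cycle_edges[of u] unfolding verts_def by blast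
    then show False using isolated x u(3) by blast
  qed
  moreover have "cycle_edges vs \<union> cycle_edges u \<subseteq> C" using u(3) vs(3) by blast
  ultimately have "two_disjoint_odd_cycles C"
    by (rule minimal_has_disjoint_odd_cycles[OF min char(1) vs(1) vs(2) u(1) u(2)])
  with char(1) show ?thesis by blast
qed

theorem mainTheorem13:
  fixes C :: "'a multiset set"
  assumes "one_complex C"
  shows "minimal_complex TYPE('k::field) C \<longleftrightarrow>
           is_even_cycle C \<or>
           two_odd_cycles_one_vertex C \<or>
           (CHAR('k) = 2 \<and> two_disjoint_odd_cycles C) \<or>
           (CHAR('k) \<noteq> 2 \<and> odd_cycles_with_path C)"
proof
  assume min: "minimal_complex TYPE('k) C"
  then obtain w :: "'a multiset \<Rightarrow> 'k" where "balanced_weighting C w" "C \<noteq> {}"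
    unfolding minimal_complex_def balanceable_def by blast
  then have "no_pendant_edge C"
    using assms no_pendant_edge_if_balanced unfolding one_complex_def by blast
  then consider "has_even_cycle C" | "has_bowtie C" | "has_dumbbell C" | "has_isolated_odd_cycle C"
    using cycle_configuration assms \<open>C \<noteq> {}\<close> by blast
  then show "is_even_cycle C \<or> two_odd_cycles_one_vertex C \<or>
      (CHAR('k) = 2 \<and> two_disjoint_odd_cycles C) \<or> (CHAR('k) \<noteq> 2 \<and> odd_cycles_with_path C)"
    by cases (use minimal_has_even_cycle[OF min] minimal_has_bowtie[OF min]
        minimal_has_dumbbell[OF min] minimal_has_isolated_odd_cycle[OF assms min] in blast)+
next
  assume "is_even_cycle C \<or> two_odd_cycles_one_vertex C \<or>
      (CHAR('k) = 2 \<and> two_disjoint_odd_cycles C) \<or> (CHAR('k) \<noteq> 2 \<and> odd_cycles_with_path C)"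
  then show "minimal_complex TYPE('k) C"
    by (elim disjE conjE) (simp_all add: minimal_complex_if_even_cycle
        minimal_complex_if_two_odd_cycles_one_vertex minimal_complex_if_two_disjoint_odd_cycles
        minimal_complex_if_odd_cycles_with_path)
qed

end
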